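(* Let $\mathbf{s}=\{1/n : n\in\mathbb{N}\}\cup\{0\}\subset\mathbb{R}$ with the topology induced from $\mathbb{R}$, and let $L(\mathbf{s})$ be the free locally convex space over $\mathbf{s}$. Then $L(\mathbf{s})$ is not a Mackey space. Consequently, $L(\mathbf{s})$ (regarded as an abelian topological group) is not a Mackey group.
   Context: All vector spaces are real. For a Tychonoff space $X$, the free locally convex space $L(X)$ is a locally convex space together with a continuous map $i:X\to L(X)$ such that every continuous map $f$ from $X$ into a locally convex space $E$ extends uniquely to a continuous linear operator $\bar f:L(X)\to E$ with $f=\bar f\circ i$; algebraically $L(X)$ is the free vector space on $X$. A locally convex vector topology $\nu$ on a vector space $E$ is compatible with a locally convex topology $\tau$ if $(E,\tau)$ and $(E,\nu)$ have the same continuous linear functionals. A locally convex space $(E,\tau)$ is a Mackey space if $\tau$ is the finest locally convex vector topology on $E$ compatible with $\tau$. Let $\mathbb{S}$ be the unit circle group and $\mathbb{S}_+=\{z\in\mathbb{S}:\mathrm{Re}(z)\ge 0\}$. For an abelian topological group $G$, $\widehat{G}$ denotes the group of continuous homomorphisms $G\to\mathbb{S}$ (characters). A subset $A\subseteq G$ is quasi-convex if for every $g\in G\setminus A$ there is $\chi\in\widehat G$ with $\chi(A)\subseteq\mathbb{S}_+$ and $\chi(g)\notin\mathbb{S}_+$. $G$ is locally quasi-convex if it has a neighborhood base at $0$ of quasi-convex sets. Two group topologies on an abelian group are compatible if they yield the same group of continuous characters. A locally quasi-convex abelian group $(G,\mu)$ is a Mackey group if every locally quasi-convex group topology $\nu$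 on $G$ compatible with $\mu$ satisfies $\nu\le\mu$. *)

theory Defs
  imports "HOL-Analysis.Analysis"
begin

definition conv_seq :: "real set" where
  "conv_seq = insert 0 {1 / real n | n. n \<ge> 1}"

type_synonym fvec = "real \<Rightarrow> real"

definition FV :: "fvec set" where
  "FV = {f. finite {x. f x \<noteq> 0} \<and> {x. f x \<noteq> 0} \<subseteq> conv_seq}"

definition vadd :: "fvec \<Rightarrow> fvec \<Rightarrow> fvec" where
  "vadd f g = (\<lambda>x. f x + g x)"

definition smul :: "real \<Rightarrow> fvec \<Rightarrow> fvec" where
  "smul c f = (\<lambda>x. c * f x)"

definition vneg :: "fvec \<Rightarrow> fvec" where
  "vneg f = (\<lambda>x. - f x)"

definition vzero :: fvec where
  "vzero = (\<lambda>x. 0)"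

definition delta :: "real \<Rightarrow> fvec" where
  "delta x = (\<lambda>y. if y = x then 1 else 0)"

definition vconvex :: "fvec set \<Rightarrow> bool" where
  "vconvex W \<longleftrightarrow> (\<forall>f\<in>W. \<forall>g\<in>W. \<forall>t::real. 0 \<le> t \<and> t \<le> 1 \<longrightarrow>
      vadd (smul t f) (smul (1 - t) g) \<in> W)"

definition vector_topology :: "fvec topology \<Rightarrow> bool" where
  "vector_topology T \<longleftrightarrow> topspace T = FV \<and>
     continuous_map (prod_topology T T) T (\<lambda>(f, g). vadd f g) \<and>
     continuous_map (prod_topology euclideanreal T) T (\<lambda>(c, f). smul c f)"

definition lc_vector_topology :: "fvec topology \<Rightarrow> bool" where
  "lc_vector_topology T \<longleftrightarrow> vector_topology T \<and>
     (\<forall>U x. openin T U \<and> x \<in> U \<longrightarrow>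
        (\<exists>W. openin T W \<and> vconvex W \<and> x \<in> W \<and> W \<subseteq> U))"

definition coarser :: "fvec topology \<Rightarrow> fvec topology \<Rightarrow> bool" where
  "coarser T T' \<longleftrightarrow> (\<forall>U. openin T U \<longrightarrow> openin T' U)"

definition free_lc_topology :: "fvec topology \<Rightarrow> bool" where
  "free_lc_topology T \<longleftrightarrow> lc_vector_topology T \<and>
     continuous_map (top_of_set conv_seq) T delta \<and>
     (\<forall>T'. lc_vector_topology T' \<and> continuous_map (top_of_set conv_seq) T' delta
           \<longrightarrow> coarser T' T)"

definition linear_on_FV :: "(fvec \<Rightarrow> real) \<Rightarrow> bool" where
  "linear_on_FV \<phi> \<longleftrightarrow> (\<forall>f\<in>FV. \<forall>g\<in>FV. \<forall>a b.
      \<phi> (vadd (smul a f) (smul b g)) = a * \<phi> f + b * \<phi> g)"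

text \<open>Continuous linear functionals (made extensional: 0 off FV).\<close>
definition lc_dual :: "fvec topology \<Rightarrow> (fvec \<Rightarrow> real) set" where
  "lc_dual T = {\<phi>. linear_on_FV \<phi> \<and> continuous_map T euclideanreal \<phi> \<and>
                   (\<forall>x. x \<notin> FV \<longrightarrow> \<phi> x = 0)}"

definition mackey_space :: "fvec topology \<Rightarrow> bool" where
  "mackey_space T \<longleftrightarrow> lc_vector_topology T \<and>
     (\<forall>\<nu>. lc_vector_topology \<nu> \<and> lc_dual \<nu> = lc_dual T \<longrightarrow> coarser \<nu> T)"

definition circle :: "complex set" where
  "circle = {z. cmod z = 1}"

definition circle_plus :: "complex set" where
  "circle_plus = {z. cmod z = 1 \<and> Re z \<ge> 0}"

definition group_topology :: "fvec topology \<Rightarrow> bool" where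
  "group_topology T \<longleftrightarrow> topspace T = FV \<and>
     continuous_map (prod_topology T T) T (\<lambda>(f, g). vadd f g) \<and>
     continuous_map T T vneg"

text \<open>Continuous characters of (FV, +) into the circle (made extensional: 1 off FV).\<close>
definition characters :: "fvec topology \<Rightarrow> (fvec \<Rightarrow> complex) set" where
  "characters T = {ch. (\<forall>f\<in>FV. ch f \<in> circle) \<and>
      (\<forall>f\<in>FV. \<forall>g\<in>FV. ch (vadd f g) = ch f * ch g) \<and>
      continuous_map T euclidean ch \<and> (\<forall>x. x \<notin> FV \<longrightarrow> ch x = 1)}"

definition quasi_convex :: "fvec topology \<Rightarrow> fvec set \<Rightarrow> bool" where
  "quasi_convex T A \<longleftrightarrow> A \<subseteq> FV \<and>
     (\<forall>g\<in>FV - A. \<exists>ch\<in>characters T. ch ` A \<subseteq> circle_plus \<and> ch g \<notin> circle_plus)"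

definition locally_quasi_convex :: "fvec topology \<Rightarrow> bool" where
  "locally_quasi_convex T \<longleftrightarrow> group_topology T \<and>
     (\<forall>U. openin T U \<and> vzero \<in> U \<longrightarrow>
        (\<exists>W. quasi_convex T W \<and> W \<subseteq> U \<and> (\<exists>V. openin T V \<and> vzero \<in> V \<and> V \<subseteq> W)))"

definition mackey_group :: "fvec topology \<Rightarrow> bool" where
  "mackey_group T \<longleftrightarrow> locally_quasi_convex T \<and>
     (\<forall>\<nu>. locally_quasi_convex \<nu> \<and> characters \<nu> = characters T \<longrightarrow> coarser \<nu> T)"

end

theory Submission
  imports Defs
begin

text \<open>Let \<open>e\<^sub>0 = \<delta>\<^sub>0\<close> and \<open>e\<^sub>n = \<delta>\<^sub>1\<^sub>/\<^sub>n - \<delta>\<^sub>0\<close> (\<open>n \<ge> 1\<close>), a basis of the free vector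
  space on \<open>s\<close> with coordinates \<open>c\<^sub>n\<close>. The free locally convex topology is generated by the
  weighted \<open>\<ell>\<^sup>1\<close> seminorms \<open>\<Sum>\<^sub>n w\<^sub>n \<bar>c\<^sub>n\<bar>\<close> with \<open>w\<^sub>n > 0\<close>, \<open>w\<^sub>n \<longrightarrow> 0\<close>: they make \<open>\<delta>\<close>
  continuous because \<open>e\<^sub>n\<close> has norm \<open>w\<^sub>n\<close>, and every locally convex topology making \<open>\<delta>\<close>
  continuous has an absolutely convex neighbourhood of \<open>0\<close> containing \<open>t\<^sub>n e\<^sub>n\<close> with
  \<open>t\<^sub>n \<longrightarrow> \<infinity>\<close>, hence a weighted \<open>\<ell>\<^sup>1\<close> ball.

  Adding the seminorm \<open>sup\<^sub>n \<bar>c\<^sub>n\<bar>\<close> (over \<open>n \<ge> 1\<close>) gives a strictly finer topology, in which \<open>e\<^sub>n\<close> stays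
  away from \<open>0\<close>. A linear functional bounded by \<open>\<Sum>\<^sub>n w\<^sub>n \<bar>c\<^sub>n\<bar> + l sup\<^sub>n \<bar>c\<^sub>n\<bar>\<close> must have
  \<open>\<phi> e\<^sub>n \<longrightarrow> 0\<close>, so it is bounded by the weighted \<open>\<ell>\<^sup>1\<close> seminorm with weights
  \<open>\<bar>\<phi> e\<^sub>n\<bar> + 1/(n+1)\<close>: both topologies have the same dual. A continuous character is
  \<open>cis \<circ> \<phi>\<close> for a continuous linear \<open>\<phi>\<close>, so they also have the same characters, and both
  are locally quasi-convex since every seminorm is attained, up to a factor, by a dominated
  functional.\<close>

section \<open>The free vector space and its vector topologies\<close>

lemma FV_iff: "f \<in> FV \<longleftrightarrow> finite {x. f x \<noteq> 0} \<and> (\<forall>x. f x \<noteq> 0 \<longrightarrow> x \<in> conv_seq)"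
  unfolding FV_def by auto

lemma FV_lincomb:
  assumes "f \<in> FV" "g \<in> FV"
  shows "(\<lambda>x. a * f x + b * g x) \<in> FV"
proof -
  have "{x. a * f x + b * g x \<noteq> 0} \<subseteq> {x. f x \<noteq> 0} \<union> {x. g x \<noteq> 0}" by auto
  then show ?thesis using assms unfolding FV_iff by (auto intro: finite_subset)
qed

lemma FV_add: "f \<in> FV \<Longrightarrow> g \<in> FV \<Longrightarrow> (\<lambda>x. f x + g x) \<in> FV"
  using FV_lincomb[of f g 1 1] by simp

lemma FV_diff: "f \<in> FV \<Longrightarrow> g \<in> FV \<Longrightarrow> (\<lambda>x. f x - g x) \<in> FV"
  using FV_lincomb[of f g 1 "-1"] by simp

lemma FV_scale: "f \<in> FV \<Longrightarrow> (\<lambda>x. c * f x) \<in> FV"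
  using FV_lincomb[of f f c 0] by simp

lemma FV_divide: "f \<in> FV \<Longrightarrow> (\<lambda>x. f x / c) \<in> FV"
  using FV_scale[of f "1 / c"] by simp

lemma FV_zero: "(\<lambda>x. 0) \<in> FV"
  unfolding FV_iff by simp

lemma FV_sum: "finite J \<Longrightarrow> (\<And>j. j \<in> J \<Longrightarrow> v j \<in> FV) \<Longrightarrow> (\<lambda>x. \<Sum>j\<in>J. c j * v j x) \<in> FV"
proof (induction J rule: finite_induct)
  case empty
  then show ?case using FV_zero by simp
next
  case (insert j J)
  then show ?case using FV_add[OF FV_scale] by simp
qed

lemma delta_in_FV: "x \<in> conv_seq \<Longrightarrow> delta x \<in> FV"
  unfolding FV_iff delta_def by auto

lemma linear_on_FVI:
  assumes "\<And>f g a b. f \<in> FV \<Longrightarrow> g \<in> FV \<Longrightarrow> \<phi> (\<lambda>x. a * f x + b * g x) = a * \<phi> f + b * \<phi> g"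
  shows "linear_on_FV \<phi>"
  using assms unfolding linear_on_FV_def vadd_def smul_def by auto

lemma linear_on_FV_lincomb:
  "linear_on_FV \<phi> \<Longrightarrow> f \<in> FV \<Longrightarrow> g \<in> FV \<Longrightarrow> \<phi> (\<lambda>x. a * f x + b * g x) = a * \<phi> f + b * \<phi> g"
  unfolding linear_on_FV_def vadd_def smul_def by auto

lemma linear_on_FV_add:
  "linear_on_FV \<phi> \<Longrightarrow> f \<in> FV \<Longrightarrow> g \<in> FV \<Longrightarrow> \<phi> (\<lambda>x. f x + g x) = \<phi> f + \<phi> g"
  using linear_on_FV_lincomb[of \<phi> f g 1 1] by simp

lemma linear_on_FV_diff:
  "linear_on_FV \<phi> \<Longrightarrow> f \<in> FV \<Longrightarrow> g \<in> FV \<Longrightarrow> \<phi> (\<lambda>x. f x - g x) = \<phi> f - \<phi> g"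
  using linear_on_FV_lincomb[of \<phi> f g 1 "-1"] by simp

lemma linear_on_FV_scale:
  "linear_on_FV \<phi> \<Longrightarrow> f \<in> FV \<Longrightarrow> \<phi> (\<lambda>x. c * f x) = c * \<phi> f"
  using linear_on_FV_lincomb[of \<phi> f f c 0] by simp

lemma linear_on_FV_zero: "linear_on_FV \<phi> \<Longrightarrow> \<phi> (\<lambda>x. 0) = 0"
  using linear_on_FV_scale[of \<phi> "\<lambda>x. 0" 0] FV_zero by simp

lemma linear_on_FV_sum:
  assumes "linear_on_FV \<phi>" "finite J" "\<And>j. j \<in> J \<Longrightarrow> v j \<in> FV"
  shows "\<phi> (\<lambda>x. \<Sum>j\<in>J. c j * v j x) = (\<Sum>j\<in>J. c j * \<phi> (v j))"
  using assms(2,3)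
proof (induction J rule: finite_induct)
  case empty
  then show ?case using linear_on_FV_zero[OF assms(1)] by simp
next
  case (insert j J)
  have "\<phi> (\<lambda>x. c j * v j x + 1 * (\<Sum>j\<in>J. c j * v j x)) = c j * \<phi> (v j) + 1 * \<phi> (\<lambda>x. \<Sum>j\<in>J. c j * v j x)"
    using insert FV_sum[of J v c] by (intro linear_on_FV_lincomb[OF assms(1)]) auto
  then show ?case using insert by simp
qed

lemma continuous_map_vadd_right:
  assumes "vector_topology T" "b \<in> FV"
  shows "continuous_map T T (\<lambda>h. vadd h b)"
proof -
  have "continuous_map T (prod_topology T T) (\<lambda>h. (h, b))"
    using assms unfolding vector_topology_def by (intro continuous_map_pairedI) auto
  then show ?thesis
    using continuous_map_compose[where g = "\<lambda>(f, g). vadd f g"] assms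
    unfolding vector_topology_def o_def by fastforce
qed

lemma continuous_map_smul_left:
  assumes "vector_topology T"
  shows "continuous_map T T (\<lambda>h. smul a h)"
proof -
  have "continuous_map T (prod_topology euclideanreal T) (\<lambda>h. (a, h))"
    by (intro continuous_map_pairedI) auto
  then show ?thesis
    using continuous_map_compose[where g = "\<lambda>(c, f). smul c f"] assms
    unfolding vector_topology_def o_def by fastforce
qed

lemma continuous_map_smul_right:
  assumes "vector_topology T" "e \<in> FV"
  shows "continuous_map euclideanreal T (\<lambda>c. smul c e)"
proof -
  have "continuous_map euclideanreal (prod_topology euclideanreal T) (\<lambda>c. (c, e))"
    using assms unfolding vector_topology_def by (intro continuous_map_pairedI) auto
  then show ?thesis
    using continuous_map_compose[where g = "\<lambda>(c, f). smul c f"] assms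
    unfolding vector_topology_def o_def by fastforce
qed

lemma lc_vector_topology_imp_group_topology:
  assumes "lc_vector_topology T"
  shows "group_topology T"
proof -
  have "vector_topology T" using assms unfolding lc_vector_topology_def by simp
  moreover have "vneg = smul (-1)" by (simp add: vneg_def smul_def fun_eq_iff)
  ultimately show ?thesis
    using continuous_map_smul_left unfolding group_topology_def vector_topology_def by metis
qed

lemma coarser_imp_continuous_map:
  "coarser T T' \<Longrightarrow> topspace T = topspace T' \<Longrightarrow> continuous_map T X h \<Longrightarrow> continuous_map T' X h"
  unfolding coarser_def continuous_map_def by auto

lemma coarser_imp_dual_subset:
  assumes "coarser T T'" "topspace T = topspace T'"
  shows "lc_dual T \<subseteq> lc_dual T'" "characters T \<subseteq> characters T'"
  using coarser_imp_continuous_map[OF assms] unfolding lc_dual_def characters_def by auto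

section \<open>Topologies generated by seminorms\<close>

definition seminorm_on_FV :: "(fvec \<Rightarrow> real) \<Rightarrow> bool" where
  "seminorm_on_FV q \<longleftrightarrow> (\<forall>f\<in>FV. 0 \<le> q f) \<and>
     (\<forall>f\<in>FV. \<forall>g\<in>FV. q (\<lambda>x. f x + g x) \<le> q f + q g) \<and>
     (\<forall>f\<in>FV. \<forall>c. q (\<lambda>x. c * f x) = \<bar>c\<bar> * q f)"

definition seminorm_ball :: "(fvec \<Rightarrow> real) \<Rightarrow> fvec \<Rightarrow> real \<Rightarrow> fvec set" where
  "seminorm_ball q f r = {g\<in>FV. q (\<lambda>x. g x - f x) < r}"

definition seminorm_open :: "(fvec \<Rightarrow> real) set \<Rightarrow> fvec set \<Rightarrow> bool" where
  "seminorm_open Q U \<longleftrightarrow> U \<subseteq> FV \<and> (\<forall>f\<in>U. \<exists>q\<in>Q. seminorm_ball q f 1 \<subseteq> U)"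

definition seminorm_topology :: "(fvec \<Rightarrow> real) set \<Rightarrow> fvec topology" where
  "seminorm_topology Q = topology (seminorm_open Q)"

context
  fixes q :: "fvec \<Rightarrow> real"
  assumes q: "seminorm_on_FV q"
begin

lemma seminorm_nonneg: "f \<in> FV \<Longrightarrow> 0 \<le> q f"
  using q unfolding seminorm_on_FV_def by auto

lemma seminorm_triangle: "f \<in> FV \<Longrightarrow> g \<in> FV \<Longrightarrow> q (\<lambda>x. f x + g x) \<le> q f + q g"
  using q unfolding seminorm_on_FV_def by auto

lemma seminorm_scale: "f \<in> FV \<Longrightarrow> q (\<lambda>x. c * f x) = \<bar>c\<bar> * q f"
  using q unfolding seminorm_on_FV_def by auto

lemma seminorm_zero: "q (\<lambda>x. 0) = 0"
  using seminorm_scale[of "\<lambda>x. 0" 0] FV_zero by simp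

lemma seminorm_divide: "f \<in> FV \<Longrightarrow> c > 0 \<Longrightarrow> q (\<lambda>x. f x / c) = q f / c"
  using seminorm_scale[of f "1 / c"] by simp

lemma seminorm_diff_triangle:
  assumes "f \<in> FV" "g \<in> FV" "h \<in> FV"
  shows "q (\<lambda>x. f x - h x) \<le> q (\<lambda>x. f x - g x) + q (\<lambda>x. g x - h x)"
  using seminorm_triangle[of "\<lambda>x. f x - g x" "\<lambda>x. g x - h x"] assms FV_diff by simp

lemma seminorm_scale_diff:
  assumes "f \<in> FV" "f0 \<in> FV"
  shows "q (\<lambda>x. c * f x - c0 * f0 x) \<le> \<bar>c\<bar> * q (\<lambda>x. f x - f0 x) + \<bar>c - c0\<bar> * q f0"
proof -
  have "q (\<lambda>x. c * (f x - f0 x) + (c - c0) * f0 x)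
      \<le> q (\<lambda>x. c * (f x - f0 x)) + q (\<lambda>x. (c - c0) * f0 x)"
    using assms FV_diff FV_scale by (intro seminorm_triangle) auto
  also have "\<dots> = \<bar>c\<bar> * q (\<lambda>x. f x - f0 x) + \<bar>c - c0\<bar> * q f0"
    using seminorm_scale FV_diff assms by auto
  finally show ?thesis by (simp add: algebra_simps)
qed

lemma centre_in_seminorm_ball: "f \<in> FV \<Longrightarrow> r > 0 \<Longrightarrow> f \<in> seminorm_ball q f r"
  unfolding seminorm_ball_def using seminorm_zero by simp

lemma convex_seminorm_ball:
  assumes f: "f \<in> FV"
  shows "vconvex (seminorm_ball q f 1)"
  unfolding vconvex_def
proof (intro ballI allI impI)
  fix g h and t :: real
  assume "g \<in> seminorm_ball q f 1" "h \<in> seminorm_ball q f 1" and t: "0 \<le> t \<and> t \<le> 1"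
  then have g: "g \<in> FV" "q (\<lambda>y. g y - f y) < 1" and h: "h \<in> FV" "q (\<lambda>y. h y - f y) < 1"
    unfolding seminorm_ball_def by auto
  have "q (\<lambda>y. t * (g y - f y) + (1 - t) * (h y - f y))
      \<le> q (\<lambda>y. t * (g y - f y)) + q (\<lambda>y. (1 - t) * (h y - f y))"
    by (rule seminorm_triangle) (use f g h FV_diff FV_scale in auto)
  also have "\<dots> = t * q (\<lambda>y. g y - f y) + (1 - t) * q (\<lambda>y. h y - f y)"
    using seminorm_scale FV_diff f g h t by auto
  also have "\<dots> < 1"
    using g h t by (intro convex_bound_lt) auto
  finally have "q (\<lambda>y. (t * g y + (1 - t) * h y) - f y) < 1"
    by (simp add: algebra_simps)
  then show "vadd (smul t g) (smul (1 - t) h) \<in> seminorm_ball q f 1"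
    using FV_lincomb[OF g(1) h(1)] unfolding seminorm_ball_def vadd_def smul_def by simp
qed

end

lemma linear_dominated_by_seminorm:
  assumes \<phi>: "linear_on_FV \<phi>" and q: "seminorm_on_FV q" and B: "B > 0"
    and bound: "\<And>g. g \<in> FV \<Longrightarrow> q g < 1 \<Longrightarrow> \<bar>\<phi> g\<bar> < B"
    and f: "f \<in> FV"
  shows "\<bar>\<phi> f\<bar> \<le> B * q f"
proof (rule ccontr)
  define r where "r = \<bar>\<phi> f\<bar> / B"
  assume "\<not> \<bar>\<phi> f\<bar> \<le> B * q f"
  then have "q f < r" using B by (simp add: r_def field_simps)
  then have r: "0 < r" "q (\<lambda>x. f x / r) < 1"
    using seminorm_nonneg[OF q f] seminorm_divide[OF q f] by auto
  then have "\<bar>\<phi> (\<lambda>x. f x / r)\<bar> < B" using bound FV_scale[OF f, of "1 / r"] by simp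
  then have "\<bar>\<phi> f\<bar> / r < B"
    using linear_on_FV_scale[OF \<phi> f, of "1 / r"] r(1) by simp
  then show False using r(1) B by (simp add: r_def field_simps)
qed

locale seminorm_family =
  fixes Q :: "(fvec \<Rightarrow> real) set"
  assumes nonempty: "Q \<noteq> {}"
    and seminorm: "q \<in> Q \<Longrightarrow> seminorm_on_FV q"
    and scale_closed: "q \<in> Q \<Longrightarrow> r > 0 \<Longrightarrow> (\<lambda>f. r * q f) \<in> Q"
    and directed: "q1 \<in> Q \<Longrightarrow> q2 \<in> Q \<Longrightarrow> \<exists>q\<in>Q. \<forall>f\<in>FV. q1 f \<le> q f \<and> q2 f \<le> q f"
begin

abbreviation "T \<equiv> seminorm_topology Q"

lemma istopology_seminorm_open: "istopology (seminorm_open Q)"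
  unfolding istopology_def
proof (intro conjI allI impI)
  fix S S' assume S: "seminorm_open Q S" and S': "seminorm_open Q S'"
  show "seminorm_open Q (S \<inter> S')"
    unfolding seminorm_open_def
  proof (intro conjI ballI)
    show "S \<inter> S' \<subseteq> FV" using S unfolding seminorm_open_def by auto
    fix f assume f: "f \<in> S \<inter> S'"
    obtain q1 q2 where q12: "q1 \<in> Q" "seminorm_ball q1 f 1 \<subseteq> S" "q2 \<in> Q" "seminorm_ball q2 f 1 \<subseteq> S'"
      using S S' f unfolding seminorm_open_def by blast
    obtain q where q: "q \<in> Q" "\<forall>h\<in>FV. q1 h \<le> q h \<and> q2 h \<le> q h"
      using directed q12 by blast
    have "f \<in> FV" using f S unfolding seminorm_open_def by auto
    then have "seminorm_ball q f 1 \<subseteq> seminorm_ball q1 f 1 \<inter> seminorm_ball q2 f 1"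
      using q(2) FV_diff unfolding seminorm_ball_def by fastforce
    then show "\<exists>q\<in>Q. seminorm_ball q f 1 \<subseteq> S \<inter> S'"
      using q(1) q12 by blast
  qed
next
  fix K assume K: "\<forall>S\<in>K. seminorm_open Q S"
  show "seminorm_open Q (\<Union>K)"
    unfolding seminorm_open_def
  proof (intro conjI ballI)
    show "\<Union>K \<subseteq> FV" using K unfolding seminorm_open_def by auto
    fix f assume "f \<in> \<Union>K"
    then obtain S where S: "S \<in> K" "f \<in> S" by blast
    then obtain q where "q \<in> Q" "seminorm_ball q f 1 \<subseteq> S"
      using K unfolding seminorm_open_def by blast
    then show "\<exists>q\<in>Q. seminorm_ball q f 1 \<subseteq> \<Union>K" using S(1) by blast
  qed
qed

lemma openin_seminorm_topology: "openin T U \<longleftrightarrow> seminorm_open Q U"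
  unfolding seminorm_topology_def using topology_inverse'[OF istopology_seminorm_open] by simp

lemma seminorm_openD: "openin T U \<Longrightarrow> f \<in> U \<Longrightarrow> \<exists>q\<in>Q. seminorm_ball q f 1 \<subseteq> U"
  unfolding openin_seminorm_topology seminorm_open_def by blast

lemma topspace_seminorm_topology: "topspace T = FV"
proof -
  obtain q where "q \<in> Q" using nonempty by blast
  then have "openin T FV"
    unfolding openin_seminorm_topology seminorm_open_def seminorm_ball_def by auto
  moreover have "openin T U \<Longrightarrow> U \<subseteq> FV" for U
    unfolding openin_seminorm_topology seminorm_open_def by simp
  ultimately show ?thesis unfolding topspace_def by auto
qed

lemma openin_seminorm_ball:
  assumes q: "q \<in> Q" and f: "f \<in> FV"
  shows "openin T (seminorm_ball q f r)"
  unfolding openin_seminorm_topology seminorm_open_def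
proof (intro conjI ballI)
  show "seminorm_ball q f r \<subseteq> FV" unfolding seminorm_ball_def by auto
  fix h assume h: "h \<in> seminorm_ball q f r"
  define s where "s = r - q (\<lambda>x. h x - f x)"
  have s: "s > 0" "h \<in> FV" using h unfolding seminorm_ball_def s_def by auto
  have "seminorm_ball (\<lambda>g. (1 / s) * q g) h 1 \<subseteq> seminorm_ball q f r"
  proof
    fix g assume "g \<in> seminorm_ball (\<lambda>g. (1 / s) * q g) h 1"
    then have g: "g \<in> FV" "q (\<lambda>x. g x - h x) < s"
      using s unfolding seminorm_ball_def by (auto simp: field_simps)
    then show "g \<in> seminorm_ball q f r"
      using seminorm_diff_triangle[OF seminorm[OF q] g(1) s(2) f]
      unfolding seminorm_ball_def s_def by auto
  qed
  then show "\<exists>q'\<in>Q. seminorm_ball q' h 1 \<subseteq> seminorm_ball q f r"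
    using scale_closed[OF q, of "1 / s"] s by auto
qed

lemma continuous_map_vadd: "continuous_map (prod_topology T T) T (\<lambda>(f, g). vadd f g)"
  unfolding continuous_map_def topspace_prod_topology topspace_seminorm_topology
proof (intro conjI allI impI)
  show "(\<lambda>(f, g). vadd f g) \<in> FV \<times> FV \<rightarrow> FV"
    using FV_add by (auto simp: vadd_def)
  fix U assume U: "openin T U"
  show "openin (prod_topology T T) {x \<in> FV \<times> FV. (case x of (f, g) \<Rightarrow> vadd f g) \<in> U}"
    unfolding openin_prod_topology_alt
  proof (intro allI impI)
    fix f g assume "(f, g) \<in> {x \<in> FV \<times> FV. (case x of (f, g) \<Rightarrow> vadd f g) \<in> U}"
    then have f: "f \<in> FV" and g: "g \<in> FV" and fg: "vadd f g \<in> U" by auto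
    obtain q where q: "q \<in> Q" "seminorm_ball q (vadd f g) 1 \<subseteq> U"
      using seminorm_openD[OF U fg] by blast
    note sn = seminorm[OF q(1)]
    have "a \<in> FV \<and> b \<in> FV \<and> vadd a b \<in> U" if a: "a \<in> seminorm_ball q f (1/2)" and b: "b \<in> seminorm_ball q g (1/2)" for a b
    proof -
      have aF: "a \<in> FV" and bF: "b \<in> FV" using a b unfolding seminorm_ball_def by auto
      have "q (\<lambda>x. (a x - f x) + (b x - g x)) \<le> q (\<lambda>x. a x - f x) + q (\<lambda>x. b x - g x)"
        using aF bF f g FV_diff by (intro seminorm_triangle[OF sn]) auto
      also have "\<dots> < 1" using a b unfolding seminorm_ball_def by auto
      finally have "q (\<lambda>x. (a x + b x) - (f x + g x)) < 1" by (simp add: algebra_simps)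
      then show ?thesis
        using q(2) FV_add[OF aF bF] aF bF unfolding seminorm_ball_def vadd_def by auto
    qed
    then have "seminorm_ball q f (1/2) \<times> seminorm_ball q g (1/2)
        \<subseteq> {x \<in> FV \<times> FV. (case x of (f, g) \<Rightarrow> vadd f g) \<in> U}" by auto
    moreover have "openin T (seminorm_ball q f (1/2))" "openin T (seminorm_ball q g (1/2))"
      using openin_seminorm_ball[OF q(1)] f g by auto
    moreover have "f \<in> seminorm_ball q f (1/2)" "g \<in> seminorm_ball q g (1/2)"
      using centre_in_seminorm_ball[OF sn] f g by auto
    ultimately show "\<exists>V W. openin T V \<and> openin T W \<and> f \<in> V \<and> g \<in> W \<and>
        V \<times> W \<subseteq> {x \<in> FV \<times> FV. (case x of (f, g) \<Rightarrow> vadd f g) \<in> U}"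
      by blast
  qed
qed

lemma continuous_map_smul: "continuous_map (prod_topology euclideanreal T) T (\<lambda>(c, f). smul c f)"
  unfolding continuous_map_def topspace_prod_topology topspace_seminorm_topology
proof (intro conjI allI impI)
  show "(\<lambda>(c, f). smul c f) \<in> topspace euclideanreal \<times> FV \<rightarrow> FV"
    using FV_scale by (auto simp: smul_def)
  fix U assume U: "openin T U"
  show "openin (prod_topology euclideanreal T)
          {x \<in> topspace euclideanreal \<times> FV. (case x of (c, f) \<Rightarrow> smul c f) \<in> U}"
    unfolding openin_prod_topology_alt
  proof (intro allI impI)
    fix c0 f0 assume "(c0, f0) \<in> {x \<in> topspace euclideanreal \<times> FV. (case x of (c, f) \<Rightarrow> smul c f) \<in> U}"
    then have f0: "f0 \<in> FV" and c0f0: "smul c0 f0 \<in> U" by auto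
    obtain q where q: "q \<in> Q" "seminorm_ball q (smul c0 f0) 1 \<subseteq> U"
      using seminorm_openD[OF U c0f0] by blast
    note sn = seminorm[OF q(1)]
    define a where "a = q f0"
    have a0: "a \<ge> 0" using seminorm_nonneg[OF sn f0] a_def by simp
    define d where "d = 1 / (2 * (a + 1))"
    define r where "r = 1 / (2 * (\<bar>c0\<bar> + 1))"
    have d0: "d > 0" "d \<le> 1/2" "d * a < 1/2" using a0 unfolding d_def by (auto simp: field_simps)
    have r0: "r > 0" "(\<bar>c0\<bar> + 1) * r = 1/2" unfolding r_def by auto
    have "smul c f \<in> U" if c: "c \<in> ball c0 d" and f: "f \<in> seminorm_ball q f0 r" for c f
    proof -
      have fF: "f \<in> FV" and qf: "q (\<lambda>x. f x - f0 x) < r" using f unfolding seminorm_ball_def by auto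
      have cd: "\<bar>c - c0\<bar> < d" using c by (simp add: dist_real_def abs_minus_commute)
      have "q (\<lambda>x. c * f x - c0 * f0 x) \<le> \<bar>c\<bar> * q (\<lambda>x. f x - f0 x) + \<bar>c - c0\<bar> * a"
        using seminorm_scale_diff[OF sn fF f0] unfolding a_def .
      also have "\<dots> < 1"
      proof -
        have "\<bar>c\<bar> * q (\<lambda>x. f x - f0 x) \<le> (\<bar>c0\<bar> + 1) * r"
          using cd d0 qf seminorm_nonneg[OF sn FV_diff[OF fF f0]] by (intro mult_mono) auto
        moreover have "\<bar>c - c0\<bar> * a \<le> d * a" using cd a0 by (intro mult_right_mono) auto
        ultimately show ?thesis using d0 r0 by linarith
      qed
      finally show ?thesis
        using q(2) FV_scale[OF fF] unfolding seminorm_ball_def smul_def by auto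
    qed
    moreover have "seminorm_ball q f0 r \<subseteq> FV" unfolding seminorm_ball_def by auto
    ultimately have "ball c0 d \<times> seminorm_ball q f0 r
        \<subseteq> {x \<in> topspace euclideanreal \<times> FV. (case x of (c, f) \<Rightarrow> smul c f) \<in> U}" by auto
    then show "\<exists>V W. openin euclideanreal V \<and> openin T W \<and> c0 \<in> V \<and> f0 \<in> W \<and>
        V \<times> W \<subseteq> {x \<in> topspace euclideanreal \<times> FV. (case x of (c, f) \<Rightarrow> smul c f) \<in> U}"
      using openin_seminorm_ball[OF q(1) f0] centre_in_seminorm_ball[OF sn f0 r0(1)] d0(1)
      by (intro exI[of _ "ball c0 d"] exI[of _ "seminorm_ball q f0 r"]) auto
  qed
qed

lemma lc_vector_topology: "lc_vector_topology T"
  unfolding lc_vector_topology_def vector_topology_def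
proof (intro conjI allI impI topspace_seminorm_topology continuous_map_vadd continuous_map_smul)
  fix U f assume Uf: "openin T U \<and> f \<in> U"
  then obtain q where q: "q \<in> Q" "seminorm_ball q f 1 \<subseteq> U"
    using seminorm_openD by blast
  have f: "f \<in> FV" using Uf openin_subset topspace_seminorm_topology by blast
  show "\<exists>W. openin T W \<and> vconvex W \<and> f \<in> W \<and> W \<subseteq> U"
    using openin_seminorm_ball[OF q(1) f] convex_seminorm_ball[OF seminorm[OF q(1)] f]
      centre_in_seminorm_ball[OF seminorm[OF q(1)] f zero_less_one] q(2) by blast
qed

lemma continuous_map_if_dominated:
  assumes \<phi>: "linear_on_FV \<phi>" and q: "q \<in> Q" and dom: "\<forall>f\<in>FV. \<bar>\<phi> f\<bar> \<le> q f"
  shows "continuous_map T euclideanreal \<phi>"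
  unfolding continuous_map_def
proof (intro conjI allI impI)
  show "\<phi> \<in> topspace T \<rightarrow> topspace euclideanreal" by simp
  fix V :: "real set" assume V: "openin euclideanreal V"
  show "openin T {x \<in> topspace T. \<phi> x \<in> V}"
    unfolding openin_seminorm_topology seminorm_open_def topspace_seminorm_topology
  proof (intro conjI ballI)
    fix f assume "f \<in> {x \<in> FV. \<phi> x \<in> V}"
    then have fF: "f \<in> FV" and "\<phi> f \<in> V" by auto
    then obtain e where e: "e > 0" "ball (\<phi> f) e \<subseteq> V"
      using V openE[of V "\<phi> f"] by auto
    have "seminorm_ball (\<lambda>h. (2 / e) * q h) f 1 \<subseteq> {x \<in> FV. \<phi> x \<in> V}"
    proof
      fix g assume "g \<in> seminorm_ball (\<lambda>h. (2 / e) * q h) f 1"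
      then have gF: "g \<in> FV" and qg: "q (\<lambda>x. g x - f x) < e / 2"
        using e(1) unfolding seminorm_ball_def by (auto simp: field_simps)
      have "\<bar>\<phi> g - \<phi> f\<bar> \<le> q (\<lambda>x. g x - f x)"
        using linear_on_FV_diff[OF \<phi> gF fF] dom FV_diff[OF gF fF] by auto
      then have "\<phi> g \<in> ball (\<phi> f) e"
        using qg e(1) by (simp add: dist_real_def abs_minus_commute)
      then show "g \<in> {x \<in> FV. \<phi> x \<in> V}" using gF e(2) by blast
    qed
    then show "\<exists>q'\<in>Q. seminorm_ball q' f 1 \<subseteq> {x \<in> FV. \<phi> x \<in> V}"
      using scale_closed[OF q, of "2 / e"] e(1) by auto
  qed auto
qed

lemma dominated_if_continuous_map:
  assumes \<phi>: "linear_on_FV \<phi>" and c: "continuous_map T euclideanreal \<phi>"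
  shows "\<exists>q\<in>Q. \<forall>f\<in>FV. \<bar>\<phi> f\<bar> \<le> q f"
proof -
  have "openin T {f \<in> topspace T. \<phi> f \<in> ball 0 1}"
    using c by (intro openin_continuous_map_preimage) auto
  moreover have "(\<lambda>x. 0) \<in> {f \<in> topspace T. \<phi> f \<in> ball 0 1}"
    using linear_on_FV_zero[OF \<phi>] FV_zero topspace_seminorm_topology by auto
  ultimately obtain q where q: "q \<in> Q" "seminorm_ball q (\<lambda>x. 0) 1 \<subseteq> {f \<in> topspace T. \<phi> f \<in> ball 0 1}"
    using seminorm_openD by blast
  have "\<bar>\<phi> g\<bar> < 1" if "g \<in> FV" "q g < 1" for g
  proof -
    have "g \<in> seminorm_ball q (\<lambda>x. 0) 1" using that unfolding seminorm_ball_def by simp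
    then show ?thesis using q(2) by auto
  qed
  then have "\<bar>\<phi> f\<bar> \<le> 1 * q f" if "f \<in> FV" for f
    using linear_dominated_by_seminorm[OF \<phi> seminorm[OF q(1)] zero_less_one] that by blast
  then show ?thesis using q(1) by auto
qed

end

lemma coarser_seminorm_topology:
  assumes Q: "seminorm_family Q" and Q': "seminorm_family Q'"
    and dom: "\<forall>q\<in>Q. \<exists>q'\<in>Q'. \<forall>f\<in>FV. q f \<le> q' f"
  shows "coarser (seminorm_topology Q) (seminorm_topology Q')"
  unfolding coarser_def
proof (intro allI impI)
  fix U assume U: "openin (seminorm_topology Q) U"
  have UF: "U \<subseteq> FV"
    using openin_subset[OF U] seminorm_family.topspace_seminorm_topology[OF Q] by simp
  show "openin (seminorm_topology Q') U"
    unfolding seminorm_family.openin_seminorm_topology[OF Q'] seminorm_open_def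
  proof (intro conjI ballI UF)
    fix f assume f: "f \<in> U"
    obtain q where q: "q \<in> Q" "seminorm_ball q f 1 \<subseteq> U"
      using seminorm_family.seminorm_openD[OF Q U f] by blast
    obtain q' where q': "q' \<in> Q'" "\<forall>h\<in>FV. q h \<le> q' h" using dom q(1) by blast
    have "seminorm_ball q' f 1 \<subseteq> seminorm_ball q f 1"
    proof
      fix g assume "g \<in> seminorm_ball q' f 1"
      moreover have "g \<in> FV \<Longrightarrow> q (\<lambda>x. g x - f x) \<le> q' (\<lambda>x. g x - f x)"
        using q'(2) FV_diff f UF by blast
      ultimately show "g \<in> seminorm_ball q f 1" unfolding seminorm_ball_def by auto
    qed
    then show "\<exists>q'\<in>Q'. seminorm_ball q' f 1 \<subseteq> U" using q'(1) q(2) by blast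
  qed
qed

section \<open>Characters\<close>

definition exp_character :: "real \<Rightarrow> (fvec \<Rightarrow> real) \<Rightarrow> fvec \<Rightarrow> complex" where
  "exp_character c \<phi> f = (if f \<in> FV then cis (2 * pi * c * \<phi> f) else 1)"

lemma continuous_map_cis_comp:
  assumes "continuous_map T euclideanreal \<phi>"
  shows "continuous_map T euclidean (\<lambda>f. cis (a * \<phi> f))"
proof -
  have "continuous_on UNIV (\<lambda>t. cis (a * t))"
    unfolding cis_conv_exp by (intro continuous_intros)
  then show ?thesis
    using continuous_map_compose[OF assms, of euclidean "\<lambda>t. cis (a * t)"] by (simp add: o_def)
qed

lemma exp_character_in_characters:
  assumes top: "topspace T = FV" and \<phi>: "linear_on_FV \<phi>" and c: "continuous_map T euclideanreal \<phi>"
  shows "exp_character c \<phi> \<in> characters T"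
  unfolding characters_def
proof (intro CollectI conjI ballI allI impI)
  fix f assume "f \<in> FV"
  then show "exp_character c \<phi> f \<in> circle" by (simp add: exp_character_def circle_def)
next
  fix f g assume f: "f \<in> FV" and g: "g \<in> FV"
  then show "exp_character c \<phi> (vadd f g) = exp_character c \<phi> f * exp_character c \<phi> g"
    using linear_on_FV_add[OF \<phi> f g] FV_add[OF f g]
    by (simp add: exp_character_def vadd_def cis_mult algebra_simps)
next
  show "continuous_map T euclidean (exp_character c \<phi>)"
    using continuous_map_cis_comp[OF c, of "2 * pi * c"]
    by (rule continuous_map_eq) (use top in \<open>auto simp: exp_character_def mult.assoc\<close>)
qed (simp add: exp_character_def)

lemma quasi_convex_polar:
  assumes top: "topspace T = FV"
    and D: "\<And>\<phi>. \<phi> \<in> D \<Longrightarrow> linear_on_FV \<phi> \<and> continuous_map T euclideanreal \<phi>"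
  shows "quasi_convex T {f\<in>FV. \<forall>\<phi>\<in>D. \<bar>\<phi> f\<bar> \<le> 1/4}"
  unfolding quasi_convex_def
proof (intro conjI ballI)
  fix g assume "g \<in> FV - {f\<in>FV. \<forall>\<phi>\<in>D. \<bar>\<phi> f\<bar> \<le> 1/4}"
  then obtain \<phi> where g: "g \<in> FV" and \<phi>: "\<phi> \<in> D" "\<bar>\<phi> g\<bar> > 1/4" by force
  \<comment> \<open>\<open>c\<close> moves \<open>c * \<bar>\<phi> g\<bar>\<close> into \<open>(1/4, 3/4)\<close>, so that \<open>cis (2 * pi * c * \<phi> g)\<close> leaves
    the right half-plane while \<open>c \<le> 1\<close> keeps the polar set inside it.\<close>
  define c where "c = (if \<bar>\<phi> g\<bar> < 3/4 then 1 else 1 / (2 * \<bar>\<phi> g\<bar>))"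
  have c: "0 < c" "c \<le> 1" "1/4 < c * \<bar>\<phi> g\<bar>" "c * \<bar>\<phi> g\<bar> < 3/4"
    using \<phi>(2) unfolding c_def by (auto simp: field_simps)
  show "\<exists>ch\<in>characters T. ch ` {f\<in>FV. \<forall>\<phi>\<in>D. \<bar>\<phi> f\<bar> \<le> 1/4} \<subseteq> circle_plus \<and> ch g \<notin> circle_plus"
  proof (intro bexI conjI)
    show "exp_character c \<phi> \<in> characters T"
      using exp_character_in_characters[OF top] D[OF \<phi>(1)] by blast
    show "exp_character c \<phi> ` {f\<in>FV. \<forall>\<phi>\<in>D. \<bar>\<phi> f\<bar> \<le> 1/4} \<subseteq> circle_plus"
    proof clarify
      fix f assume f: "f \<in> FV" "\<forall>\<phi>\<in>D. \<bar>\<phi> f\<bar> \<le> 1/4"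
      then have "c * \<bar>\<phi> f\<bar> \<le> 1 * (1/4)" using c \<phi>(1) by (intro mult_mono) auto
      then have "\<bar>2 * pi * c * \<phi> f\<bar> \<le> pi / 2" using c by (simp add: abs_mult)
      then have "0 \<le> cos \<bar>2 * pi * c * \<phi> f\<bar>" by (intro cos_ge_zero) auto
      then show "exp_character c \<phi> f \<in> circle_plus"
        using f by (simp add: exp_character_def circle_plus_def)
    qed
    have "\<bar>2 * pi * c * \<phi> g\<bar> = 2 * pi * (c * \<bar>\<phi> g\<bar>)" using c by (simp add: abs_mult)
    then have "pi / 2 < \<bar>2 * pi * c * \<phi> g\<bar>" "\<bar>2 * pi * c * \<phi> g\<bar> < pi + pi / 2"
      using c pi_gt_zero by auto
    then have "cos \<bar>2 * pi * c * \<phi> g\<bar> < 0" by (intro cos_lt_zero_pi) auto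
    then show "exp_character c \<phi> g \<notin> circle_plus"
      using g by (simp add: exp_character_def circle_plus_def)
  qed
qed auto

definition norming :: "(fvec \<Rightarrow> real) set \<Rightarrow> bool" where
  "norming Q \<longleftrightarrow> (\<forall>q\<in>Q. \<forall>g\<in>FV. \<exists>\<phi>. linear_on_FV \<phi> \<and> (\<forall>f\<in>FV. \<bar>\<phi> f\<bar> \<le> q f) \<and> q g \<le> 2 * \<bar>\<phi> g\<bar>)"

lemma (in seminorm_family) locally_quasi_convex:
  assumes "norming Q"
  shows "locally_quasi_convex T"
  unfolding locally_quasi_convex_def
proof (intro conjI allI impI)
  show "group_topology T" using lc_vector_topology_imp_group_topology[OF lc_vector_topology] .
  fix U assume U: "openin T U \<and> vzero \<in> U"
  then obtain q where q: "q \<in> Q" "seminorm_ball q vzero 1 \<subseteq> U"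
    using seminorm_openD by blast
  have z: "vzero \<in> FV" using FV_zero by (simp add: vzero_def)
  define D where "D = {\<phi>. linear_on_FV \<phi> \<and> (\<forall>h\<in>FV. \<bar>\<phi> h\<bar> \<le> q h)}"
  define W where "W = {f\<in>FV. \<forall>\<phi>\<in>D. \<bar>\<phi> f\<bar> \<le> 1/4}"
  show "\<exists>W. quasi_convex T W \<and> W \<subseteq> U \<and> (\<exists>V. openin T V \<and> vzero \<in> V \<and> V \<subseteq> W)"
  proof (intro exI conjI)
    show "quasi_convex T W"
      unfolding W_def D_def
      by (intro quasi_convex_polar topspace_seminorm_topology) (auto intro: continuous_map_if_dominated[OF _ q(1)])
    show "W \<subseteq> U"
    proof
      fix g assume g: "g \<in> W"
      then have gF: "g \<in> FV" unfolding W_def by auto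
      obtain \<phi> where "\<phi> \<in> D" "q g \<le> 2 * \<bar>\<phi> g\<bar>"
        using assms q(1) gF unfolding norming_def D_def by blast
      then have "q g < 1" using g unfolding W_def by fastforce
      then show "g \<in> U" using q(2) gF unfolding seminorm_ball_def vzero_def by auto
    qed
    show "openin T (seminorm_ball q vzero (1/4))" using openin_seminorm_ball[OF q(1) z] .
    show "vzero \<in> seminorm_ball q vzero (1/4)" using centre_in_seminorm_ball[OF seminorm[OF q(1)] z] by simp
    show "seminorm_ball q vzero (1/4) \<subseteq> W"
      unfolding seminorm_ball_def W_def D_def vzero_def by force
  qed
qed

lemma additive_of_nat_mult:
  fixes h :: "real \<Rightarrow> real"
  assumes add: "\<And>a b. h (a + b) = h a + h b"
  shows "h (real n * x) = real n * h x"
proof (induction n)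
  case 0
  show ?case using add[of 0 0] by simp
next
  case (Suc n)
  then show ?case using add[of "real n * x" x] by (simp add: algebra_simps)
qed

lemma additive_of_int:
  fixes h :: "real \<Rightarrow> real"
  assumes add: "\<And>a b. h (a + b) = h a + h b" and one: "h 1 = 0"
  shows "h (real_of_int z) = 0"
proof -
  have nat: "h (real n) = 0" for n using additive_of_nat_mult[of h, OF add, of n 1] one by simp
  have "h (real_of_int z) + h (- real_of_int z) = 0"
    using add[of "real_of_int z" "- real_of_int z"] nat[of 0] by simp
  then show ?thesis using nat[of "nat z"] nat[of "nat (- z)"] by (cases "z \<ge> 0") auto
qed

text \<open>An additive \<open>h\<close> with \<open>h 1 = 0\<close> is 1-periodic, so a bound on \<open>[0, 1]\<close> bounds it
  everywhere, and then \<open>n * \<bar>h c\<bar> = \<bar>h (n * c)\<bar>\<close> forces \<open>h c = 0\<close>.\<close>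
lemma additive_bounded_vanishing:
  fixes h :: "real \<Rightarrow> real"
  assumes add: "\<And>a b. h (a + b) = h a + h b" and one: "h 1 = 0"
    and bound: "\<And>y. 0 \<le> y \<Longrightarrow> y \<le> 1 \<Longrightarrow> \<bar>h y\<bar> \<le> B"
  shows "h c = 0"
proof (rule ccontr)
  have multiple: "real n * \<bar>h c\<bar> \<le> B" for n
  proof -
    define y where "y = real n * c - of_int \<lfloor>real n * c\<rfloor>"
    have y: "0 \<le> y" "y \<le> 1"
      using of_int_floor_le[of "real n * c"] real_of_int_floor_add_one_gt[of "real n * c"]
      unfolding y_def by linarith+
    have "h (real n * c) = h y + h (of_int \<lfloor>real n * c\<rfloor>)"
      using add[of y "of_int \<lfloor>real n * c\<rfloor>"] by (simp add: y_def)
    also have "\<dots> = h y" using additive_of_int[of h, OF add one] by simp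
    finally have "\<bar>h (real n * c)\<bar> \<le> B"
      using bound[OF y] by simp
    then show ?thesis using additive_of_nat_mult[of h, OF add, of n c] by (simp add: abs_mult)
  qed
  assume "h c \<noteq> 0"
  obtain n :: nat where "B / \<bar>h c\<bar> < real n" using reals_Archimedean2 by blast
  then have "B < real n * \<bar>h c\<bar>" using \<open>h c \<noteq> 0\<close> by (simp add: pos_divide_less_eq)
  then show False using multiple[of n] by linarith
qed

lemma additive_bounded_near_zero_linear:
  fixes h :: "real \<Rightarrow> real"
  assumes add: "\<And>a b. h (a + b) = h a + h b"
    and \<delta>: "\<delta> > 0" and bound: "\<And>c. \<bar>c\<bar> < \<delta> \<Longrightarrow> \<bar>h c\<bar> \<le> M"
  shows "h c = c * h 1"
proof -
  define D where "D x = h x - x * h 1" for x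
  have D_add: "D (a + b) = D a + D b" for a b
    unfolding D_def using add[of a b] by (simp add: algebra_simps)
  obtain m :: nat where m: "1 / \<delta> < real m" using reals_Archimedean2 by blast
  have m_pos: "real m > 0" using m \<delta> less_trans[OF divide_pos_pos[OF zero_less_one \<delta>] m] by simp
  have "1 < real m * \<delta>" using m \<delta> by (simp add: divide_less_eq)
  then have m_small: "1 / real m < \<delta>" using m_pos by (simp add: divide_less_eq mult.commute)
  have D_bound: "\<bar>D y\<bar> \<le> real m * (M + \<delta> * \<bar>h 1\<bar>)" if "0 \<le> y" "y \<le> 1" for y
  proof -
    have "y / real m \<le> 1 / real m" using that m_pos by (simp add: divide_right_mono)
    then have small: "\<bar>y / real m\<bar> < \<delta>" using that m_pos m_small by simp
    have "\<bar>D y\<bar> = real m * \<bar>D (y / real m)\<bar>"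
      using additive_of_nat_mult[of D, OF D_add, of m "y / real m"] m_pos by (simp add: abs_mult)
    also have "\<bar>D (y / real m)\<bar> \<le> \<bar>h (y / real m)\<bar> + \<bar>y / real m\<bar> * \<bar>h 1\<bar>"
      unfolding D_def using abs_triangle_ineq4[of "h (y / real m)" "y / real m * h 1"]
      by (simp only: abs_mult)
    also have "\<dots> \<le> M + \<delta> * \<bar>h 1\<bar>"
      using bound[OF small] small by (intro add_mono mult_right_mono) auto
    finally show ?thesis using m_pos by simp
  qed
  have "D 1 = 0" unfolding D_def by simp
  then have "D c = 0" using additive_bounded_vanishing[of D, OF D_add _ D_bound] by blast
  then show ?thesis unfolding D_def by simp
qed

text \<open>A continuous character is lifted through the argument: on a seminorm ball where the
  character stays in the right half-plane, \<open>Arg \<circ> ch\<close> is additive, so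
  \<open>\<phi> f = 2 ^ k * Arg (ch (f / 2 ^ k))\<close> does not depend on large \<open>k\<close>, is additive and bounded
  near \<open>0\<close>, hence linear.\<close>

context
  fixes ch :: "fvec \<Rightarrow> complex" and q :: "fvec \<Rightarrow> real"
  assumes hom: "\<And>f g. f \<in> FV \<Longrightarrow> g \<in> FV \<Longrightarrow> ch (\<lambda>x. f x + g x) = ch f * ch g"
    and circ: "\<And>f. f \<in> FV \<Longrightarrow> cmod (ch f) = 1"
    and sn: "seminorm_on_FV q"
    and small: "\<And>g. g \<in> FV \<Longrightarrow> q g < 1 \<Longrightarrow> 0 < Re (ch g)"
begin

lemma cis_Arg_character:
  assumes "f \<in> FV"
  shows "cis (Arg (ch f)) = ch f"
proof -
  have "ch f \<noteq> 0" using circ[OF assms] by force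
  then show ?thesis using cis_Arg[of "ch f"] circ[OF assms] by (simp add: sgn_div_norm)
qed

lemma Arg_character_small: "f \<in> FV \<Longrightarrow> q f < 1 \<Longrightarrow> \<bar>Arg (ch f)\<bar> < pi / 2"
  using Arg_Re_pos small by blast

lemma Arg_character_add:
  assumes f: "f \<in> FV" and g: "g \<in> FV" and lt: "q f + q g < 1"
  shows "Arg (ch (\<lambda>x. f x + g x)) = Arg (ch f) + Arg (ch g)"
proof -
  have "q f < 1" "q g < 1" using lt seminorm_nonneg[OF sn f] seminorm_nonneg[OF sn g] by linarith+
  then have "\<bar>Arg (ch f)\<bar> < pi / 2" "\<bar>Arg (ch g)\<bar> < pi / 2"
    using Arg_character_small f g by auto
  then have "Arg (ch f) + Arg (ch g) \<in> {-pi<..pi}" by auto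
  moreover have "cis (Arg (ch f) + Arg (ch g)) = ch (\<lambda>x. f x + g x)"
    using cis_Arg_character f g hom by (simp add: cis_mult[symmetric])
  ultimately show ?thesis using Arg_cis by metis
qed

definition scaled_Arg :: "nat \<Rightarrow> fvec \<Rightarrow> real" where
  "scaled_Arg k f = 2 ^ k * Arg (ch (\<lambda>x. f x / 2 ^ k))"

lemma scaled_Arg_Suc:
  assumes f: "f \<in> FV" and lt: "q f < 2 ^ k"
  shows "scaled_Arg (Suc k) f = scaled_Arg k f"
proof -
  define h where "h = (\<lambda>x. f x / 2 ^ Suc k)"
  have "q h = q f / 2 ^ Suc k" unfolding h_def by (rule seminorm_divide[OF sn f]) simp
  also have "\<dots> < 2 ^ k / 2 ^ Suc k" using lt by (intro divide_strict_right_mono) auto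
  finally have h: "h \<in> FV" "q h < 1 / 2" using FV_divide[OF f] unfolding h_def by auto
  have "(\<lambda>x. f x / 2 ^ k) = (\<lambda>x. h x + h x)" unfolding h_def by (auto simp: fun_eq_iff field_simps)
  then have "Arg (ch (\<lambda>x. f x / 2 ^ k)) = 2 * Arg (ch h)"
    using Arg_character_add[OF h(1) h(1)] h(2) by simp
  then show ?thesis unfolding scaled_Arg_def h_def by simp
qed

lemma scaled_Arg_stable:
  assumes f: "f \<in> FV" and lt: "q f < 2 ^ k" and "k \<le> j"
  shows "scaled_Arg j f = scaled_Arg k f"
  using \<open>k \<le> j\<close>
proof (induction j rule: dec_induct)
  case (step j)
  have "(2::real) ^ k \<le> 2 ^ j" using step(1) by (intro power_increasing) auto
  then have "q f < 2 ^ j" using lt by linarith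
  then show ?case using scaled_Arg_Suc[OF f, of j] step(3) by simp
qed simp

definition Arg_lift :: "fvec \<Rightarrow> real" where
  "Arg_lift f = scaled_Arg (SOME k. q f < 2 ^ k) f"

lemma Arg_lift_eq:
  assumes f: "f \<in> FV" and lt: "q f < 2 ^ k"
  shows "Arg_lift f = scaled_Arg k f"
proof -
  define k0 where "k0 = (SOME k. q f < 2 ^ k)"
  have k0: "q f < 2 ^ k0"
    unfolding k0_def using someI_ex[OF real_arch_pow[of 2 "q f"]] by simp
  show ?thesis
    using scaled_Arg_stable[OF f lt, of "max k k0"] scaled_Arg_stable[OF f k0, of "max k k0"]
    unfolding Arg_lift_def k0_def[symmetric] by simp
qed

lemma Arg_lift_add:
  assumes f: "f \<in> FV" and g: "g \<in> FV"
  shows "Arg_lift (\<lambda>x. f x + g x) = Arg_lift f + Arg_lift g"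
proof -
  obtain k where k: "q f + q g < 2 ^ k" using real_arch_pow[of 2 "q f + q g"] by auto
  have q0: "0 \<le> q f" "0 \<le> q g" using seminorm_nonneg[OF sn] f g by auto
  have fk: "(\<lambda>x. f x / 2 ^ k) \<in> FV" "(\<lambda>x. g x / 2 ^ k) \<in> FV"
    using FV_divide f g by auto
  have "q (\<lambda>x. f x / 2 ^ k) + q (\<lambda>x. g x / 2 ^ k) < 1"
    using seminorm_divide[OF sn f] seminorm_divide[OF sn g] k by (simp add: add_divide_distrib[symmetric])
  then have "scaled_Arg k (\<lambda>x. f x + g x) = scaled_Arg k f + scaled_Arg k g"
    using Arg_character_add[OF fk] unfolding scaled_Arg_def by (simp add: add_divide_distrib distrib_left)
  moreover have "q (\<lambda>x. f x + g x) < 2 ^ k" using seminorm_triangle[OF sn f g] k by simp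
  moreover have "q f < 2 ^ k" "q g < 2 ^ k" using k q0 by linarith+
  ultimately show ?thesis
    using Arg_lift_eq[OF f] Arg_lift_eq[OF g] Arg_lift_eq[OF FV_add[OF f g]] by simp
qed

lemma character_power_two: "h \<in> FV \<Longrightarrow> ch (\<lambda>x. 2 ^ j * h x) = ch h ^ (2 ^ j)"
proof (induction j)
  case (Suc j)
  have hj: "(\<lambda>x. 2 ^ j * h x) \<in> FV" using FV_scale[OF Suc.prems] .
  have "(\<lambda>x. 2 ^ Suc j * h x) = (\<lambda>x. 2 ^ j * h x + 2 ^ j * h x)" by (simp add: fun_eq_iff)
  then have "ch (\<lambda>x. 2 ^ Suc j * h x) = ch (\<lambda>x. 2 ^ j * h x) * ch (\<lambda>x. 2 ^ j * h x)"
    using hom[OF hj hj] by simp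
  also have "\<dots> = ch h ^ (2 ^ j) * ch h ^ (2 ^ j)" using Suc by simp
  also have "\<dots> = ch h ^ (2 ^ Suc j)" by (simp add: power_add[symmetric] mult_2)
  finally show ?case .
qed simp

lemma character_eq_cis_Arg_lift:
  assumes f: "f \<in> FV"
  shows "ch f = cis (Arg_lift f)"
proof -
  obtain k where k: "q f < 2 ^ k" using real_arch_pow[of 2 "q f"] by auto
  define h where "h = (\<lambda>x. f x / 2 ^ k)"
  have h: "h \<in> FV" unfolding h_def using FV_divide[OF f] .
  have "ch f = ch h ^ (2 ^ k)" using character_power_two[OF h, of k] by (simp add: h_def)
  also have "\<dots> = cis (Arg (ch h)) ^ (2 ^ k)" using cis_Arg_character[OF h] by simp
  also have "\<dots> = cis (real (2 ^ k) * Arg (ch h))" by (rule Complex.DeMoivre)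
  also have "\<dots> = cis (Arg_lift f)" using Arg_lift_eq[OF f k] unfolding scaled_Arg_def h_def by simp
  finally show ?thesis .
qed

lemma Arg_lift_small: "f \<in> FV \<Longrightarrow> q f < 1 \<Longrightarrow> \<bar>Arg_lift f\<bar> < pi / 2"
  using Arg_lift_eq[of f 0] Arg_character_small unfolding scaled_Arg_def by simp

lemma Arg_lift_scale:
  assumes f: "f \<in> FV"
  shows "Arg_lift (\<lambda>x. c * f x) = c * Arg_lift f"
proof -
  have add: "Arg_lift (\<lambda>x. (a + b) * f x) = Arg_lift (\<lambda>x. a * f x) + Arg_lift (\<lambda>x. b * f x)" for a b
  proof -
    have "(\<lambda>x. (a + b) * f x) = (\<lambda>x. a * f x + b * f x)" by (simp add: fun_eq_iff distrib_right)
    then show ?thesis using Arg_lift_add[OF FV_scale[OF f] FV_scale[OF f], of a b] by simp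
  qed
  have \<delta>: "0 < 1 / (q f + 1)" using seminorm_nonneg[OF sn f] by simp
  have "\<bar>Arg_lift (\<lambda>x. c * f x)\<bar> \<le> pi / 2" if "\<bar>c\<bar> < 1 / (q f + 1)" for c
  proof -
    have "\<bar>c\<bar> * q f \<le> 1 / (q f + 1) * q f"
      using that seminorm_nonneg[OF sn f] by (intro mult_right_mono) auto
    also have "\<dots> < 1" using seminorm_nonneg[OF sn f] by (simp add: field_simps)
    finally have "q (\<lambda>x. c * f x) < 1" using seminorm_scale[OF sn f] by simp
    then show ?thesis using Arg_lift_small[OF FV_scale[OF f]] by (simp add: less_imp_le)
  qed
  from additive_bounded_near_zero_linear[where h = "\<lambda>c. Arg_lift (\<lambda>x. c * f x)", OF add \<delta> this]
  show ?thesis by simp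
qed

lemma character_lift:
  "\<exists>\<phi>. linear_on_FV \<phi> \<and> (\<forall>f\<in>FV. \<bar>\<phi> f\<bar> \<le> pi / 2 * q f) \<and> (\<forall>f\<in>FV. ch f = cis (\<phi> f))"
proof (intro exI conjI ballI)
  show lin: "linear_on_FV Arg_lift"
  proof (rule linear_on_FVI)
    fix f g a b assume f: "f \<in> FV" and g: "g \<in> FV"
    show "Arg_lift (\<lambda>x. a * f x + b * g x) = a * Arg_lift f + b * Arg_lift g"
      using Arg_lift_add[OF FV_scale[OF f] FV_scale[OF g]] Arg_lift_scale[OF f] Arg_lift_scale[OF g]
      by simp
  qed
  show "\<bar>Arg_lift f\<bar> \<le> pi / 2 * q f" if "f \<in> FV" for f
    using linear_dominated_by_seminorm[OF lin sn _ Arg_lift_small that] by simp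
qed (rule character_eq_cis_Arg_lift)

end

lemma (in seminorm_family) character_eq_cis_dominated:
  assumes ch: "ch \<in> characters T"
  obtains q \<phi> where "q \<in> Q" "linear_on_FV \<phi>" "\<And>f. f \<in> FV \<Longrightarrow> \<bar>\<phi> f\<bar> \<le> q f"
    "\<And>f. f \<in> FV \<Longrightarrow> ch f = cis (\<phi> f)"
proof -
  have circ: "\<And>f. f \<in> FV \<Longrightarrow> cmod (ch f) = 1"
    and hom: "\<And>f g. f \<in> FV \<Longrightarrow> g \<in> FV \<Longrightarrow> ch (\<lambda>x. f x + g x) = ch f * ch g"
    and cont: "continuous_map T euclidean ch"
    using ch unfolding characters_def circle_def vadd_def by auto
  have z: "vzero \<in> FV" using FV_zero by (simp add: vzero_def)
  have "ch vzero = ch vzero * ch vzero" using hom[OF z z] by (simp add: vzero_def)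
  moreover have "ch vzero \<noteq> 0" using circ[OF z] by auto
  ultimately have "ch vzero = 1" by simp
  moreover have "openin T {f \<in> topspace T. ch f \<in> {z. 0 < Re z}}"
    using open_halfspace_Re_gt[of 0] by (intro openin_continuous_map_preimage[OF cont]) auto
  ultimately obtain q where q: "q \<in> Q" "seminorm_ball q vzero 1 \<subseteq> {f \<in> topspace T. ch f \<in> {z. 0 < Re z}}"
    using seminorm_openD z topspace_seminorm_topology by fastforce
  then have small: "\<And>g. g \<in> FV \<Longrightarrow> q g < 1 \<Longrightarrow> 0 < Re (ch g)"
    unfolding seminorm_ball_def vzero_def by auto
  obtain \<phi> where "linear_on_FV \<phi>" "\<forall>f\<in>FV. \<bar>\<phi> f\<bar> \<le> pi / 2 * q f" "\<forall>f\<in>FV. ch f = cis (\<phi> f)"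
    using character_lift[of ch q, OF hom circ seminorm[OF q(1)] small] by blast
  moreover have "(\<lambda>f. pi / 2 * q f) \<in> Q" using scale_closed[OF q(1), of "pi / 2"] by simp
  ultimately show ?thesis using that by blast
qed

section \<open>Coordinates and weighted seminorms\<close>

text \<open>Writing
  \<open>f = \<Sum>\<^sub>x f x \<delta>\<^sub>x = (\<Sum>\<^sub>x f x) \<delta>\<^sub>0 + \<Sum>\<^sub>n f (1/n) (\<delta>\<^sub>1\<^sub>/\<^sub>n - \<delta>\<^sub>0)\<close> shows that the
  coordinates are the total mass of \<open>f\<close> and the values \<open>f (1/n)\<close>.\<close>

definition basis_vec :: "nat \<Rightarrow> fvec" where
  "basis_vec j = (if j = 0 then delta 0 else (\<lambda>x. delta (1 / real j) x - delta 0 x))"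

definition mass :: "fvec \<Rightarrow> real" where
  "mass f = sum f {x. f x \<noteq> 0}"

definition tail_support :: "fvec \<Rightarrow> nat set" where
  "tail_support f = {n. 1 \<le> n \<and> f (1 / real n) \<noteq> 0}"

definition coord :: "fvec \<Rightarrow> nat \<Rightarrow> real" where
  "coord f j = (if j = 0 then mass f else f (1 / real j))"

lemma conv_seq_iff: "x \<in> conv_seq \<longleftrightarrow> x = 0 \<or> (\<exists>n::nat. 1 \<le> n \<and> x = 1 / real n)"
  unfolding conv_seq_def by auto

lemma inj_one_over_real: "inj (\<lambda>n::nat. 1 / real n)"
  by (auto simp: inj_def)

lemma finite_tail_support: "f \<in> FV \<Longrightarrow> finite (tail_support f)"
  using finite_vimageI[OF _ inj_one_over_real, of "{x. f x \<noteq> 0}"]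
  unfolding FV_iff tail_support_def by (auto elim: finite_subset[rotated])

lemma zero_notin_tail_support [simp]: "0 \<notin> tail_support f"
  unfolding tail_support_def by simp

lemma mass_eq_sum: "finite A \<Longrightarrow> {x. f x \<noteq> 0} \<subseteq> A \<Longrightarrow> mass f = sum f A"
  unfolding mass_def by (rule sum.mono_neutral_left) auto

lemma mass_lincomb:
  assumes f: "f \<in> FV" and g: "g \<in> FV"
  shows "mass (\<lambda>x. a * f x + b * g x) = a * mass f + b * mass g"
proof -
  define A where "A = {x. f x \<noteq> 0} \<union> {x. g x \<noteq> 0}"
  have A: "finite A" using f g unfolding A_def FV_iff by auto
  have "mass (\<lambda>x. a * f x + b * g x) = (\<Sum>x\<in>A. a * f x + b * g x)"
    by (rule mass_eq_sum[OF A]) (auto simp: A_def)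
  also have "\<dots> = a * (\<Sum>x\<in>A. f x) + b * (\<Sum>x\<in>A. g x)"
    by (simp add: sum.distrib sum_distrib_left)
  also have "\<dots> = a * mass f + b * mass g"
    using mass_eq_sum[OF A, of f] mass_eq_sum[OF A, of g] by (auto simp: A_def)
  finally show ?thesis .
qed

lemma linear_on_FV_mass: "linear_on_FV mass"
  by (intro linear_on_FVI) (simp add: mass_lincomb)

lemma coord_lincomb:
  "f \<in> FV \<Longrightarrow> g \<in> FV \<Longrightarrow> coord (\<lambda>x. a * f x + b * g x) j = a * coord f j + b * coord g j"
  by (simp add: coord_def mass_lincomb)

lemma coord_eq_0: "j \<noteq> 0 \<Longrightarrow> j \<notin> tail_support f \<Longrightarrow> coord f j = 0"
  by (simp add: coord_def tail_support_def)

lemma mass_delta: "mass (delta x) = 1"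
proof -
  have "{y. delta x y \<noteq> 0} = {x}" by (auto simp: delta_def)
  then show ?thesis by (simp add: mass_def delta_def)
qed

lemma mass_eq_sum_values:
  assumes f: "f \<in> FV"
  shows "mass f = f 0 + (\<Sum>n\<in>tail_support f. f (1 / real n))"
proof -
  define A where "A = insert 0 ((\<lambda>n. 1 / real n) ` tail_support f)"
  have "{x. f x \<noteq> 0} \<subseteq> A" using f unfolding FV_iff conv_seq_iff A_def tail_support_def by auto
  then have "mass f = sum f A" using finite_tail_support[OF f] by (intro mass_eq_sum) (auto simp: A_def)
  also have "\<dots> = f 0 + sum f ((\<lambda>n. 1 / real n) ` tail_support f)"
  proof -
    have "0 \<notin> (\<lambda>n. 1 / real n) ` tail_support f" unfolding tail_support_def by auto
    then show ?thesis unfolding A_def using finite_tail_support[OF f] by simp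
  qed
  also have "sum f ((\<lambda>n. 1 / real n) ` tail_support f) = (\<Sum>n\<in>tail_support f. f (1 / real n))"
    using inj_one_over_real by (subst sum.reindex) (auto intro: inj_on_subset)
  finally show ?thesis .
qed

lemma basis_vec_in_FV: "basis_vec j \<in> FV"
proof -
  have "0 \<in> conv_seq" "j \<noteq> 0 \<Longrightarrow> 1 / real j \<in> conv_seq" unfolding conv_seq_iff by auto
  then show ?thesis using FV_diff delta_in_FV unfolding basis_vec_def by auto
qed

lemma basis_vec_at_recip: "1 \<le> m \<Longrightarrow> basis_vec j (1 / real m) = (if j = m then 1 else 0)"
  using inj_one_over_real unfolding basis_vec_def delta_def by (auto simp: inj_def)

lemma mass_basis_vec: "mass (basis_vec j) = (if j = 0 then 1 else 0)"
proof -
  have "j \<noteq> 0 \<Longrightarrow> mass (\<lambda>x. delta (1 / real j) x - delta 0 x) = mass (delta (1 / real j)) - mass (delta 0)"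
    using linear_on_FV_diff[OF linear_on_FV_mass] delta_in_FV by (simp add: conv_seq_iff)
  then show ?thesis by (simp add: basis_vec_def mass_delta)
qed

lemma FV_basis_expansion:
  assumes f: "f \<in> FV"
  shows "f = (\<lambda>x. \<Sum>j\<in>insert 0 (tail_support f). coord f j * basis_vec j x)"
proof
  fix x
  have fin: "finite (tail_support f)" using finite_tail_support[OF f] .
  have tail: "(\<Sum>n\<in>tail_support f. f (1 / real n) * delta (1 / real n) x) = (if x = 0 then 0 else f x)"
  proof (cases "\<exists>m\<in>tail_support f. x = 1 / real m")
    case True
    then obtain m where m: "m \<in> tail_support f" "x = 1 / real m" by auto
    have "(\<Sum>n\<in>tail_support f. f (1 / real n) * delta (1 / real n) x)
        = (\<Sum>n\<in>tail_support f. if n = m then f x else 0)"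
      using m inj_one_over_real by (intro sum.cong refl) (auto simp: delta_def inj_def)
    then show ?thesis using m fin by (simp add: tail_support_def)
  next
    case False
    then have "x \<noteq> 0 \<Longrightarrow> f x = 0"
      using f unfolding FV_iff conv_seq_iff tail_support_def by auto
    moreover have "(\<Sum>n\<in>tail_support f. f (1 / real n) * delta (1 / real n) x) = 0"
      using False by (intro sum.neutral) (auto simp: delta_def)
    ultimately show ?thesis by simp
  qed
  have "(\<Sum>j\<in>tail_support f. coord f j * basis_vec j x)
      = (\<Sum>n\<in>tail_support f. f (1 / real n) * (delta (1 / real n) x - delta 0 x))"
    by (intro sum.cong refl) (auto simp: coord_def basis_vec_def tail_support_def)
  then have "(\<Sum>j\<in>insert 0 (tail_support f). coord f j * basis_vec j x)
      = mass f * delta 0 x + (\<Sum>n\<in>tail_support f. f (1 / real n) * (delta (1 / real n) x - delta 0 x))"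
    using fin by (simp add: coord_def basis_vec_def)
  also have "\<dots> = (mass f - (\<Sum>n\<in>tail_support f. f (1 / real n))) * delta 0 x
      + (\<Sum>n\<in>tail_support f. f (1 / real n) * delta (1 / real n) x)"
    by (simp add: algebra_simps sum_subtractf sum_distrib_left sum_distrib_right)
  also have "\<dots> = f x"
    using tail mass_eq_sum_values[OF f] by (simp add: delta_def)
  finally show "f x = (\<Sum>j\<in>insert 0 (tail_support f). coord f j * basis_vec j x)" by simp
qed

lemma linear_on_FV_basis_expansion:
  assumes \<phi>: "linear_on_FV \<phi>" and f: "f \<in> FV"
  shows "\<phi> f = (\<Sum>j\<in>insert 0 (tail_support f). coord f j * \<phi> (basis_vec j))"
  using linear_on_FV_sum[OF \<phi>, of "insert 0 (tail_support f)" basis_vec "coord f"]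
    FV_basis_expansion[OF f] finite_tail_support[OF f] basis_vec_in_FV by simp

lemma basis_comb_in_FV: "finite B \<Longrightarrow> (\<lambda>x. \<Sum>j\<in>B. c j * basis_vec j x) \<in> FV"
  using FV_sum basis_vec_in_FV by auto

lemma basis_comb_at_recip:
  "finite B \<Longrightarrow> 1 \<le> m \<Longrightarrow> (\<Sum>j\<in>B. c j * basis_vec j (1 / real m)) = (if m \<in> B then c m else 0)"
  by (simp add: basis_vec_at_recip if_distrib cong: if_cong)

lemma mass_basis_comb:
  assumes B: "finite B" "0 \<notin> B"
  shows "mass (\<lambda>x. \<Sum>j\<in>B. c j * basis_vec j x) = 0"
proof -
  have "mass (\<lambda>x. \<Sum>j\<in>B. c j * basis_vec j x) = (\<Sum>j\<in>B. c j * mass (basis_vec j))"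
    using linear_on_FV_sum[OF linear_on_FV_mass B(1)] basis_vec_in_FV by blast
  also have "\<dots> = 0" using B(2) by (intro sum.neutral) (auto simp: mass_basis_vec)
  finally show ?thesis .
qed

lemma tail_support_basis_comb: "finite B \<Longrightarrow> tail_support (\<lambda>x. \<Sum>j\<in>B. c j * basis_vec j x) \<subseteq> B"
  using basis_comb_at_recip unfolding tail_support_def by (auto split: if_splits)

definition null_weight :: "(nat \<Rightarrow> real) \<Rightarrow> bool" where
  "null_weight w \<longleftrightarrow> (\<forall>n. 0 < w n) \<and> w \<longlonglongrightarrow> 0"

definition weighted_l1 :: "(nat \<Rightarrow> real) \<Rightarrow> fvec \<Rightarrow> real" where
  "weighted_l1 w f = (\<Sum>j\<in>insert 0 (tail_support f). w j * \<bar>coord f j\<bar>)"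

definition tail_sup :: "fvec \<Rightarrow> real" where
  "tail_sup f = Max (insert 0 ((\<lambda>n. \<bar>f (1 / real n)\<bar>) ` tail_support f))"

definition weighted_seminorm :: "(nat \<Rightarrow> real) \<Rightarrow> real \<Rightarrow> fvec \<Rightarrow> real" where
  "weighted_seminorm w l f = weighted_l1 w f + l * tail_sup f"

definition weighted_seminorms :: "real set \<Rightarrow> (fvec \<Rightarrow> real) set" where
  "weighted_seminorms L = {weighted_seminorm w l | w l. null_weight w \<and> l \<in> L}"

lemma null_weight_pos: "null_weight w \<Longrightarrow> 0 < w n"
  unfolding null_weight_def by simp

lemma null_weight_inverse_Suc: "null_weight (\<lambda>n. 1 / (real n + 1))"
  unfolding null_weight_def using LIMSEQ_inverse_real_of_nat_add[of 0]
  by (auto simp: inverse_eq_divide add.commute)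

lemma weighted_l1_eq_sum:
  "finite J \<Longrightarrow> insert 0 (tail_support f) \<subseteq> J \<Longrightarrow> weighted_l1 w f = (\<Sum>j\<in>J. w j * \<bar>coord f j\<bar>)"
  unfolding weighted_l1_def by (rule sum.mono_neutral_left) (auto simp: coord_eq_0)

lemma weighted_l1_nonneg: "(\<And>n. 0 \<le> w n) \<Longrightarrow> 0 \<le> weighted_l1 w f"
  unfolding weighted_l1_def by (intro sum_nonneg) auto

lemma weighted_l1_mono: "(\<And>n. w n \<le> w' n) \<Longrightarrow> weighted_l1 w f \<le> weighted_l1 w' f"
  unfolding weighted_l1_def by (intro sum_mono mult_right_mono) auto

lemma seminorm_weighted_l1:
  assumes w: "\<And>n. 0 \<le> w n"
  shows "seminorm_on_FV (weighted_l1 w)"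
  unfolding seminorm_on_FV_def
proof (intro conjI ballI allI)
  fix f assume "f \<in> FV" then show "0 \<le> weighted_l1 w f" using weighted_l1_nonneg w by auto
next
  fix f g assume f: "f \<in> FV" and g: "g \<in> FV"
  define J where "J = insert 0 (tail_support f \<union> tail_support g \<union> tail_support (\<lambda>x. f x + g x))"
  have J: "finite J" unfolding J_def using finite_tail_support f g FV_add by auto
  have "weighted_l1 w (\<lambda>x. f x + g x) = (\<Sum>j\<in>J. w j * \<bar>coord (\<lambda>x. f x + g x) j\<bar>)"
    by (rule weighted_l1_eq_sum[OF J]) (auto simp: J_def)
  also have "\<dots> \<le> (\<Sum>j\<in>J. w j * \<bar>coord f j\<bar> + w j * \<bar>coord g j\<bar>)"
  proof (intro sum_mono)
    fix j
    have "\<bar>coord (\<lambda>x. f x + g x) j\<bar> \<le> \<bar>coord f j\<bar> + \<bar>coord g j\<bar>"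
      using coord_lincomb[OF f g, of 1 1 j] by simp
    then show "w j * \<bar>coord (\<lambda>x. f x + g x) j\<bar> \<le> w j * \<bar>coord f j\<bar> + w j * \<bar>coord g j\<bar>"
      using w[of j] by (metis distrib_left mult_left_mono)
  qed
  also have "\<dots> = weighted_l1 w f + weighted_l1 w g"
  proof -
    have "weighted_l1 w f = (\<Sum>j\<in>J. w j * \<bar>coord f j\<bar>)"
      by (rule weighted_l1_eq_sum[OF J]) (auto simp: J_def)
    moreover have "weighted_l1 w g = (\<Sum>j\<in>J. w j * \<bar>coord g j\<bar>)"
      by (rule weighted_l1_eq_sum[OF J]) (auto simp: J_def)
    ultimately show ?thesis by (simp add: sum.distrib)
  qed
  finally show "weighted_l1 w (\<lambda>x. f x + g x) \<le> weighted_l1 w f + weighted_l1 w g" .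
next
  fix f c assume f: "f \<in> FV"
  define J where "J = insert 0 (tail_support f \<union> tail_support (\<lambda>x. c * f x))"
  have J: "finite J" unfolding J_def using finite_tail_support f FV_scale by auto
  have "weighted_l1 w (\<lambda>x. c * f x) = (\<Sum>j\<in>J. w j * \<bar>coord (\<lambda>x. c * f x) j\<bar>)"
    by (rule weighted_l1_eq_sum[OF J]) (auto simp: J_def)
  also have "\<dots> = (\<Sum>j\<in>J. \<bar>c\<bar> * (w j * \<bar>coord f j\<bar>))"
    using coord_lincomb[OF f f, of c 0] by (simp add: abs_mult mult.left_commute)
  also have "\<dots> = \<bar>c\<bar> * weighted_l1 w f"
  proof -
    have "weighted_l1 w f = (\<Sum>j\<in>J. w j * \<bar>coord f j\<bar>)"
      by (rule weighted_l1_eq_sum[OF J]) (auto simp: J_def)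
    then show ?thesis by (simp add: sum_distrib_left)
  qed
  finally show "weighted_l1 w (\<lambda>x. c * f x) = \<bar>c\<bar> * weighted_l1 w f" .
qed

lemma tail_sup_ge: "f \<in> FV \<Longrightarrow> 1 \<le> n \<Longrightarrow> \<bar>f (1 / real n)\<bar> \<le> tail_sup f"
  unfolding tail_sup_def using finite_tail_support
  by (cases "n \<in> tail_support f") (auto simp: tail_support_def intro!: Max_ge)

lemma tail_sup_nonneg: "f \<in> FV \<Longrightarrow> 0 \<le> tail_sup f"
  unfolding tail_sup_def using finite_tail_support by simp

lemma tail_sup_le:
  "f \<in> FV \<Longrightarrow> 0 \<le> b \<Longrightarrow> (\<And>n. 1 \<le> n \<Longrightarrow> \<bar>f (1 / real n)\<bar> \<le> b) \<Longrightarrow> tail_sup f \<le> b"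
  unfolding tail_sup_def using finite_tail_support by (auto simp: tail_support_def)

lemma tail_sup_attained:
  assumes "f \<in> FV"
  obtains n where "1 \<le> n" "tail_sup f \<le> \<bar>f (1 / real n)\<bar>"
proof -
  have "tail_sup f \<in> insert 0 ((\<lambda>n. \<bar>f (1 / real n)\<bar>) ` tail_support f)"
    unfolding tail_sup_def using finite_tail_support[OF assms] by (intro Max_in) auto
  then show ?thesis using that[of 1] that unfolding tail_support_def by auto
qed

lemma seminorm_tail_sup: "seminorm_on_FV tail_sup"
  unfolding seminorm_on_FV_def
proof (intro conjI ballI allI)
  fix f g assume f: "f \<in> FV" and g: "g \<in> FV"
  show "tail_sup (\<lambda>x. f x + g x) \<le> tail_sup f + tail_sup g"
    using tail_sup_ge[OF f] tail_sup_ge[OF g] tail_sup_nonneg[OF f] tail_sup_nonneg[OF g]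
    by (intro tail_sup_le[OF FV_add[OF f g]]) (auto intro: order_trans[OF abs_triangle_ineq add_mono])
next
  fix f c assume f: "f \<in> FV"
  show "tail_sup (\<lambda>x. c * f x) = \<bar>c\<bar> * tail_sup f"
  proof (rule antisym)
    show "tail_sup (\<lambda>x. c * f x) \<le> \<bar>c\<bar> * tail_sup f"
      using tail_sup_ge[OF f] tail_sup_nonneg[OF f]
      by (intro tail_sup_le[OF FV_scale[OF f]]) (auto simp: abs_mult mult_left_mono)
    obtain n where "1 \<le> n" "tail_sup f \<le> \<bar>f (1 / real n)\<bar>" using tail_sup_attained[OF f] .
    then have "\<bar>c\<bar> * tail_sup f \<le> \<bar>c * f (1 / real n)\<bar>" by (simp add: abs_mult mult_left_mono)
    also have "\<dots> \<le> tail_sup (\<lambda>x. c * f x)" using tail_sup_ge[OF FV_scale[OF f] \<open>1 \<le> n\<close>] by simp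
    finally show "\<bar>c\<bar> * tail_sup f \<le> tail_sup (\<lambda>x. c * f x)" .
  qed
qed (rule tail_sup_nonneg)

lemma seminorm_weighted_seminorm:
  assumes w: "\<And>n. 0 \<le> w n" and l: "0 \<le> l"
  shows "seminorm_on_FV (weighted_seminorm w l)"
  unfolding seminorm_on_FV_def weighted_seminorm_def
proof (intro conjI ballI allI)
  note p = seminorm_weighted_l1[of w, OF w] and t = seminorm_tail_sup
  fix f assume f: "f \<in> FV"
  show "0 \<le> weighted_l1 w f + l * tail_sup f"
    using seminorm_nonneg[OF p f] seminorm_nonneg[OF t f] l by simp
  fix c
  show "weighted_l1 w (\<lambda>x. c * f x) + l * tail_sup (\<lambda>x. c * f x)
      = \<bar>c\<bar> * (weighted_l1 w f + l * tail_sup f)"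
    using seminorm_scale[OF p f] seminorm_scale[OF t f] by (simp add: algebra_simps)
next
  note p = seminorm_weighted_l1[of w, OF w] and t = seminorm_tail_sup
  fix f g assume f: "f \<in> FV" and g: "g \<in> FV"
  have "l * tail_sup (\<lambda>x. f x + g x) \<le> l * (tail_sup f + tail_sup g)"
    using seminorm_triangle[OF t f g] l by (rule mult_left_mono)
  then show "weighted_l1 w (\<lambda>x. f x + g x) + l * tail_sup (\<lambda>x. f x + g x)
      \<le> weighted_l1 w f + l * tail_sup f + (weighted_l1 w g + l * tail_sup g)"
    using seminorm_triangle[OF p f g] by (simp add: algebra_simps)
qed

lemma seminorm_family_weighted_seminorms:
  assumes "L \<noteq> {}" "\<And>l. l \<in> L \<Longrightarrow> 0 \<le> l" "\<And>l r. l \<in> L \<Longrightarrow> r > 0 \<Longrightarrow> r * l \<in> L"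
    "\<And>l l'. l \<in> L \<Longrightarrow> l' \<in> L \<Longrightarrow> max l l' \<in> L"
  shows "seminorm_family (weighted_seminorms L)"
proof
  show "weighted_seminorms L \<noteq> {}"
    using assms(1) null_weight_inverse_Suc unfolding weighted_seminorms_def by blast
next
  fix q assume "q \<in> weighted_seminorms L"
  then show "seminorm_on_FV q"
    using assms(2) seminorm_weighted_seminorm null_weight_pos less_imp_le
    unfolding weighted_seminorms_def by blast
next
  fix q and r :: real assume "q \<in> weighted_seminorms L" and r: "r > 0"
  then obtain w l where q: "q = weighted_seminorm w l" "null_weight w" "l \<in> L"
    unfolding weighted_seminorms_def by blast
  have "null_weight (\<lambda>n. r * w n)"
    using q(2) r tendsto_mult_right_zero unfolding null_weight_def by auto
  moreover have "(\<lambda>f. r * q f) = weighted_seminorm (\<lambda>n. r * w n) (r * l)"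
    unfolding q(1) weighted_seminorm_def weighted_l1_def
    by (simp add: sum_distrib_left algebra_simps)
  ultimately show "(\<lambda>f. r * q f) \<in> weighted_seminorms L"
    using assms(3)[OF q(3) r] unfolding weighted_seminorms_def by blast
next
  fix q1 q2 assume "q1 \<in> weighted_seminorms L" "q2 \<in> weighted_seminorms L"
  then obtain w1 l1 w2 l2 where q: "q1 = weighted_seminorm w1 l1" "null_weight w1" "l1 \<in> L"
      "q2 = weighted_seminorm w2 l2" "null_weight w2" "l2 \<in> L"
    unfolding weighted_seminorms_def by blast
  define w where "w n = max (w1 n) (w2 n)" for n
  have "null_weight w"
    using q(2,5) tendsto_max[of w1 0 sequentially w2 0]
    unfolding null_weight_def w_def by (auto simp: less_max_iff_disj)
  moreover have "q1 f \<le> weighted_seminorm w (max l1 l2) f \<and> q2 f \<le> weighted_seminorm w (max l1 l2) f"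
    if "f \<in> FV" for f
    using weighted_l1_mono[of w1 w f] weighted_l1_mono[of w2 w f] tail_sup_nonneg[OF that]
    unfolding q weighted_seminorm_def w_def
    by (auto intro!: add_mono mult_right_mono)
  ultimately show "\<exists>q\<in>weighted_seminorms L. \<forall>f\<in>FV. q1 f \<le> q f \<and> q2 f \<le> q f"
    using assms(4)[OF q(3,6)] unfolding weighted_seminorms_def by blast
qed

lemma coord_functional_le_weighted_l1:
  assumes J: "finite J" and a: "\<And>j. j \<in> J \<Longrightarrow> \<bar>a j\<bar> \<le> w j" and w: "\<And>n. 0 \<le> w n"
    and f: "f \<in> FV"
  shows "\<bar>\<Sum>j\<in>J. a j * coord f j\<bar> \<le> weighted_l1 w f"
proof -
  define J' where "J' = J \<union> insert 0 (tail_support f)"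
  have J': "finite J'" unfolding J'_def using J finite_tail_support[OF f] by simp
  have "\<bar>\<Sum>j\<in>J. a j * coord f j\<bar> \<le> (\<Sum>j\<in>J. w j * \<bar>coord f j\<bar>)"
    using a by (intro order_trans[OF sum_abs] sum_mono) (auto simp: abs_mult mult_right_mono)
  also have "\<dots> \<le> (\<Sum>j\<in>J'. w j * \<bar>coord f j\<bar>)"
    using J' w by (intro sum_mono2) (auto simp: J'_def)
  also have "\<dots> = weighted_l1 w f"
    by (rule weighted_l1_eq_sum[symmetric]) (use J' in \<open>auto simp: J'_def\<close>)
  finally show ?thesis .
qed

lemma linear_on_FV_coord_functional: "linear_on_FV (\<lambda>f. \<Sum>j\<in>J. a j * coord f j)"
  by (intro linear_on_FVI) (simp add: coord_lincomb algebra_simps sum.distrib sum_distrib_left)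

text \<open>Each weighted seminorm is, up to a factor 2, attained by a dominated functional: the
  weighted \<open>\<ell>\<^sup>1\<close> part by a sign-weighted sum of coordinates, the sup part by a single
  coordinate where the supremum is attained.\<close>

lemma norming_weighted_seminorms:
  assumes L: "\<And>l. l \<in> L \<Longrightarrow> 0 \<le> l"
  shows "norming (weighted_seminorms L)"
  unfolding norming_def
proof (intro ballI)
  fix q g assume "q \<in> weighted_seminorms L" and g: "g \<in> FV"
  then obtain w l where q: "q = weighted_seminorm w l" "null_weight w" "l \<in> L"
    unfolding weighted_seminorms_def by blast
  have w: "0 \<le> w n" for n using null_weight_pos[OF q(2)] less_imp_le by blast
  have l: "0 \<le> l" using L q(3) .
  define J where "J = insert 0 (tail_support g)"
  have J: "finite J" unfolding J_def using finite_tail_support[OF g] by simp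
  define \<phi>1 where "\<phi>1 f = (\<Sum>j\<in>J. (w j * sgn (coord g j)) * coord f j)" for f
  obtain m where m: "1 \<le> m" "tail_sup g \<le> \<bar>g (1 / real m)\<bar>" using tail_sup_attained[OF g] .
  define \<phi>2 where "\<phi>2 f = l * sgn (g (1 / real m)) * f (1 / real m)" for f
  have lin: "linear_on_FV \<phi>1" "linear_on_FV \<phi>2"
    unfolding \<phi>1_def \<phi>2_def
    by (rule linear_on_FV_coord_functional) (intro linear_on_FVI, simp add: algebra_simps)
  have dom: "\<bar>\<phi>1 f\<bar> \<le> q f" "\<bar>\<phi>2 f\<bar> \<le> q f" if f: "f \<in> FV" for f
  proof -
    have "\<bar>\<phi>1 f\<bar> \<le> weighted_l1 w f"
      unfolding \<phi>1_def using w by (intro coord_functional_le_weighted_l1[OF J _ _ f]) (auto simp: abs_mult abs_sgn_eq)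
    moreover have "\<bar>\<phi>2 f\<bar> \<le> l * tail_sup f"
      unfolding \<phi>2_def using l tail_sup_ge[OF f m(1)]
      by (simp add: abs_mult abs_sgn_eq mult_left_mono)
    ultimately show "\<bar>\<phi>1 f\<bar> \<le> q f" "\<bar>\<phi>2 f\<bar> \<le> q f"
      using weighted_l1_nonneg[of w f] w l tail_sup_nonneg[OF f]
      unfolding q(1) weighted_seminorm_def by auto
  qed
  have "\<phi>1 g = weighted_l1 w g"
    unfolding \<phi>1_def J_def weighted_l1_def by (intro sum.cong refl) (simp add: sgn_if)
  moreover have "\<phi>2 g = l * \<bar>g (1 / real m)\<bar>"
    unfolding \<phi>2_def by (simp add: sgn_if)
  then have "l * tail_sup g \<le> \<bar>\<phi>2 g\<bar>" using l m(2) by (simp add: mult_left_mono)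
  ultimately have "q g \<le> 2 * \<bar>\<phi>1 g\<bar> \<or> q g \<le> 2 * \<bar>\<phi>2 g\<bar>"
    using weighted_l1_nonneg[of w g] w l tail_sup_nonneg[OF g]
    unfolding q(1) weighted_seminorm_def by auto
  then show "\<exists>\<phi>. linear_on_FV \<phi> \<and> (\<forall>f\<in>FV. \<bar>\<phi> f\<bar> \<le> q f) \<and> q g \<le> 2 * \<bar>\<phi> g\<bar>"
    using lin dom by blast
qed

lemma weighted_l1_basis_comb:
  assumes B: "finite B" "0 \<notin> B"
  shows "weighted_l1 w (\<lambda>x. \<Sum>j\<in>B. c j * basis_vec j x) = (\<Sum>j\<in>B. w j * \<bar>c j\<bar>)"
proof -
  let ?v = "\<lambda>x. \<Sum>j\<in>B. c j * basis_vec j x"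
  have "weighted_l1 w ?v = (\<Sum>j\<in>insert 0 B. w j * \<bar>coord ?v j\<bar>)"
    by (rule weighted_l1_eq_sum) (use B tail_support_basis_comb[OF B(1)] in auto)
  also have "\<dots> = (\<Sum>j\<in>B. w j * \<bar>coord ?v j\<bar>)"
    using B mass_basis_comb[OF B] by (simp add: coord_def)
  also have "\<dots> = (\<Sum>j\<in>B. w j * \<bar>c j\<bar>)"
  proof (intro sum.cong refl)
    fix j assume j: "j \<in> B"
    then have "1 \<le> j" using B(2) by (cases j) auto
    then show "w j * \<bar>coord ?v j\<bar> = w j * \<bar>c j\<bar>"
      using basis_comb_at_recip[OF B(1), of j c] j by (simp add: coord_def)
  qed
  finally show ?thesis .
qed

lemma tail_sup_basis_comb_le:
  "finite B \<Longrightarrow> 0 \<le> b \<Longrightarrow> (\<And>j. j \<in> B \<Longrightarrow> \<bar>c j\<bar> \<le> b) \<Longrightarrow>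
    tail_sup (\<lambda>x. \<Sum>j\<in>B. c j * basis_vec j x) \<le> b"
  by (rule tail_sup_le[OF basis_comb_in_FV]) (auto simp: basis_comb_at_recip)

lemma weighted_seminorm_basis_comb_le:
  assumes B: "finite B" "0 \<notin> B" "card B = k" "0 < k"
    and c: "\<And>j. j \<in> B \<Longrightarrow> \<bar>c j\<bar> \<le> 1 / real k" and w: "\<And>j. j \<in> B \<Longrightarrow> w j \<le> a"
    and a: "0 \<le> a" and l: "0 \<le> l"
  shows "weighted_seminorm w l (\<lambda>x. \<Sum>j\<in>B. c j * basis_vec j x) \<le> a + l / real k"
proof -
  have "weighted_l1 w (\<lambda>x. \<Sum>j\<in>B. c j * basis_vec j x) = (\<Sum>j\<in>B. w j * \<bar>c j\<bar>)"
    by (rule weighted_l1_basis_comb[OF B(1,2)])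
  also have "\<dots> \<le> (\<Sum>j\<in>B. a * (1 / real k))"
    using c w a by (intro sum_mono mult_mono) auto
  also have "\<dots> = a" using B(3,4) by simp
  finally have "weighted_l1 w (\<lambda>x. \<Sum>j\<in>B. c j * basis_vec j x) \<le> a" .
  moreover have "l * tail_sup (\<lambda>x. \<Sum>j\<in>B. c j * basis_vec j x) \<le> l / real k"
  proof -
    have "tail_sup (\<lambda>x. \<Sum>j\<in>B. c j * basis_vec j x) \<le> 1 / real k"
      using c by (intro tail_sup_basis_comb_le[OF B(1)]) auto
    from mult_left_mono[OF this l] show ?thesis by simp
  qed
  ultimately show ?thesis unfolding weighted_seminorm_def by linarith
qed

lemma weighted_l1_basis_vec: "1 \<le> n \<Longrightarrow> weighted_l1 w (basis_vec n) = w n"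
  using weighted_l1_basis_comb[of "{n}" w "\<lambda>_. 1"] by simp

lemma tail_sup_basis_vec: "1 \<le> n \<Longrightarrow> tail_sup (basis_vec n) = 1"
  using tail_sup_basis_comb_le[of "{n}" 1 "\<lambda>_. 1"] tail_sup_ge[OF basis_vec_in_FV, of n n]
  by (simp add: basis_vec_at_recip)

section \<open>The free locally convex topology\<close>

abbreviation free_topology :: "fvec topology" where
  "free_topology \<equiv> seminorm_topology (weighted_seminorms {0})"

interpretation free: seminorm_family "weighted_seminorms {0}"
  by (rule seminorm_family_weighted_seminorms) auto

lemma one_over_real_separated:
  assumes n: "1 \<le> n" and m: "1 \<le> m" and "n \<noteq> m"
  shows "1 / (real m * (real m + 1)) \<le> \<bar>1 / real n - 1 / real m\<bar>"
proof (cases "n < m")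
  case True
  have "1 / real m \<le> 1 / (real n + 1)" using True n by (intro divide_left_mono) auto
  also have "\<dots> = 1 / real n - 1 / (real n * (real n + 1))"
    using n by (simp add: field_simps add_nonneg_eq_0_iff)
  finally have "1 / real m \<le> 1 / real n - 1 / (real n * (real n + 1))" .
  moreover have "1 / (real m * (real m + 1)) \<le> 1 / (real n * (real n + 1))"
    using True n by (intro divide_left_mono mult_mono) auto
  ultimately show ?thesis by linarith
next
  case False
  then have "m < n" using \<open>n \<noteq> m\<close> by linarith
  then have "1 / real n \<le> 1 / (real m + 1)" using m by (intro divide_left_mono) auto
  also have "\<dots> = 1 / real m - 1 / (real m * (real m + 1))"
    using m by (simp add: field_simps add_nonneg_eq_0_iff)
  finally show ?thesis by linarith
qed

lemma openin_conv_seqI: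
  assumes S: "S \<subseteq> conv_seq" and tail: "0 \<in> S \<Longrightarrow> \<exists>N. \<forall>n\<ge>N. 1 / real n \<in> S"
  shows "openin (top_of_set conv_seq) S"
  unfolding openin_euclidean_subtopology_iff
proof (intro conjI ballI S)
  fix x assume x: "x \<in> S"
  show "\<exists>e>0. \<forall>x'\<in>conv_seq. dist x' x < e \<longrightarrow> x' \<in> S"
  proof (cases "x = 0")
    case True
    then obtain N where N: "\<forall>n\<ge>N. 1 / real n \<in> S" using tail x by blast
    have "x' \<in> S" if x': "x' \<in> conv_seq" "dist x' x < 1 / (real N + 1)" for x'
    proof -
      consider "x' = 0" | n where "1 \<le> n" "x' = 1 / real n" using x'(1) unfolding conv_seq_iff by auto
      then show ?thesis
      proof cases
        case 2
        then have "1 / real n < 1 / (real N + 1)" using x'(2) True by (simp add: dist_real_def)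
        then have "N \<le> n" using 2(1) by (simp add: frac_less2 divide_less_cancel field_simps)
        then show ?thesis using N 2 by simp
      qed (use x True in simp)
    qed
    then show ?thesis by (intro exI[of _ "1 / (real N + 1)"]) auto
  next
    case False
    then obtain m where m: "1 \<le> m" "x = 1 / real m"
      using subsetD[OF S x] unfolding conv_seq_iff by auto
    have "x' = x" if x': "x' \<in> conv_seq" "dist x' x < 1 / (real m * (real m + 1))" for x'
    proof -
      consider "x' = 0" | n where "1 \<le> n" "x' = 1 / real n" using x'(1) unfolding conv_seq_iff by auto
      then show ?thesis
      proof cases
        case 1
        have "1 / (real m * (real m + 1)) \<le> 1 / real m" using m(1) by (intro divide_left_mono) auto
        then show ?thesis using x' 1 m by (simp add: dist_real_def)
      next
        case 2
        then show ?thesis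
          using one_over_real_separated[OF 2(1) m(1)] x'(2) m(2) by (cases "n = m") (auto simp: dist_real_def)
      qed
    qed
    then show ?thesis using x m(1) by (intro exI[of _ "1 / (real m * (real m + 1))"]) auto
  qed
qed

lemma basis_vec_eq_delta_diff: "1 \<le> n \<Longrightarrow> basis_vec n = (\<lambda>x. delta (1 / real n) x - delta 0 x)"
  unfolding basis_vec_def by simp

lemma continuous_map_delta_free_topology: "continuous_map (top_of_set conv_seq) free_topology delta"
  unfolding continuous_map_def
proof (intro conjI allI impI)
  show "delta \<in> topspace (top_of_set conv_seq) \<rightarrow> topspace free_topology"
    using delta_in_FV free.topspace_seminorm_topology by auto
  fix U assume U: "openin free_topology U"
  show "openin (top_of_set conv_seq) {x \<in> topspace (top_of_set conv_seq). delta x \<in> U}"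
  proof (rule openin_conv_seqI)
    assume "0 \<in> {x \<in> topspace (top_of_set conv_seq). delta x \<in> U}"
    then obtain q where "q \<in> weighted_seminorms {0}" "seminorm_ball q (delta 0) 1 \<subseteq> U"
      using free.seminorm_openD[OF U] by auto
    then obtain w where w: "null_weight w" "seminorm_ball (weighted_seminorm w 0) (delta 0) 1 \<subseteq> U"
      unfolding weighted_seminorms_def by auto
    then obtain N where N: "\<forall>n\<ge>N. w n < 1"
      using order_tendstoD(2)[of w 0 sequentially 1] unfolding null_weight_def eventually_sequentially by auto
    have "1 / real n \<in> conv_seq \<and> delta (1 / real n) \<in> U" if n: "max N 1 \<le> n" for n
    proof -
      have "1 / real n \<in> conv_seq" using n unfolding conv_seq_iff by auto
      moreover have "weighted_seminorm w 0 (\<lambda>x. delta (1 / real n) x - delta 0 x) < 1"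
        using weighted_l1_basis_vec[of n w] basis_vec_eq_delta_diff[of n] N n
        by (simp add: weighted_seminorm_def)
      ultimately show ?thesis using w(2) delta_in_FV unfolding seminorm_ball_def by auto
    qed
    then show "\<exists>N. \<forall>n\<ge>N. 1 / real n \<in> {x \<in> topspace (top_of_set conv_seq). delta x \<in> U}"
      by (intro exI[of _ "max N 1"]) simp
  qed auto
qed

definition absconvex :: "fvec set \<Rightarrow> bool" where
  "absconvex B \<longleftrightarrow> B \<subseteq> FV \<and> vconvex B \<and> (\<lambda>x. 0) \<in> B \<and> (\<forall>h\<in>B. (\<lambda>x. - h x) \<in> B)"

lemma vconvexD:
  "vconvex B \<Longrightarrow> f \<in> B \<Longrightarrow> g \<in> B \<Longrightarrow> 0 \<le> t \<Longrightarrow> t \<le> 1 \<Longrightarrow> (\<lambda>x. t * f x + (1 - t) * g x) \<in> B"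
  unfolding vconvex_def vadd_def smul_def by auto

lemma absconvex_lincomb:
  assumes B: "absconvex B" and u: "u \<in> B" and v: "v \<in> B" and ab: "\<bar>a\<bar> + \<bar>b\<bar> \<le> 1"
  shows "(\<lambda>x. a * u x + b * v x) \<in> B"
proof -
  have cv: "vconvex B" and zero: "(\<lambda>x. 0) \<in> B" and neg: "\<And>h. h \<in> B \<Longrightarrow> (\<lambda>x. - h x) \<in> B"
    using B unfolding absconvex_def by auto
  define u' where "u' = (if a \<ge> 0 then u else (\<lambda>x. - u x))"
  define v' where "v' = (if b \<ge> 0 then v else (\<lambda>x. - v x))"
  have u': "u' \<in> B" and v': "v' \<in> B" using u v neg unfolding u'_def v'_def by auto
  have eq: "(\<lambda>x. a * u x + b * v x) = (\<lambda>x. \<bar>a\<bar> * u' x + \<bar>b\<bar> * v' x)"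
    by (simp add: u'_def v'_def fun_eq_iff)
  define s where "s = \<bar>a\<bar> + \<bar>b\<bar>"
  show ?thesis
  proof (cases "s = 0")
    case True
    then have "a = 0" "b = 0" unfolding s_def by auto
    then show ?thesis using zero by simp
  next
    case False
    then have s: "0 < s" "s \<le> 1" using ab unfolding s_def by auto
    have "(\<lambda>x. (\<bar>a\<bar> / s) * u' x + (1 - \<bar>a\<bar> / s) * v' x) \<in> B"
      using s by (intro vconvexD[OF cv u' v']) (auto simp: s_def field_simps)
    from vconvexD[OF cv this zero, of s]
    have "(\<lambda>x. s * ((\<bar>a\<bar> / s) * u' x + (1 - \<bar>a\<bar> / s) * v' x) + (1 - s) * 0) \<in> B"
      using s by simp
    moreover have "(\<lambda>x. s * ((\<bar>a\<bar> / s) * u' x + (1 - \<bar>a\<bar> / s) * v' x) + (1 - s) * 0)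
        = (\<lambda>x. \<bar>a\<bar> * u' x + \<bar>b\<bar> * v' x)"
    proof (rule ext)
      fix x
      have "s * (\<bar>a\<bar> / s) = \<bar>a\<bar>" "s * (1 - \<bar>a\<bar> / s) = \<bar>b\<bar>"
        using s(1) by (simp_all add: s_def right_diff_distrib)
      moreover have "s * ((\<bar>a\<bar> / s) * u' x + (1 - \<bar>a\<bar> / s) * v' x)
          = (s * (\<bar>a\<bar> / s)) * u' x + (s * (1 - \<bar>a\<bar> / s)) * v' x"
        by (simp only: distrib_left mult.assoc)
      ultimately show "s * ((\<bar>a\<bar> / s) * u' x + (1 - \<bar>a\<bar> / s) * v' x) + (1 - s) * 0
          = \<bar>a\<bar> * u' x + \<bar>b\<bar> * v' x" by simp
    qed
    ultimately show ?thesis using eq by simp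
  qed
qed

lemma absconvex_sum:
  assumes B: "absconvex B" and J: "finite J" and v: "\<And>j. j \<in> J \<Longrightarrow> v j \<in> B"
    and c: "(\<Sum>j\<in>J. \<bar>c j\<bar>) \<le> 1"
  shows "(\<lambda>x. \<Sum>j\<in>J. c j * v j x) \<in> B"
  using J v c
proof (induction J arbitrary: c rule: finite_induct)
  case empty
  then show ?case using B unfolding absconvex_def by simp
next
  case (insert i J)
  define s where "s = (\<Sum>j\<in>J. \<bar>c j\<bar>)"
  have s: "0 \<le> s" "\<bar>c i\<bar> + s \<le> 1" using insert unfolding s_def by (auto simp: sum_nonneg)
  have "\<exists>b\<in>B. (\<lambda>x. \<Sum>j\<in>J. c j * v j x) = (\<lambda>x. s * b x)"
  proof (cases "s = 0")
    case True
    then have "\<forall>j\<in>J. c j = 0" using insert(1) unfolding s_def by (simp add: sum_nonneg_eq_0_iff)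
    then show ?thesis using B unfolding absconvex_def by (intro bexI[of _ "\<lambda>x. 0"]) auto
  next
    case False
    have "(\<lambda>x. \<Sum>j\<in>J. (c j / s) * v j x) \<in> B"
      using s False insert by (intro insert.IH) (auto simp: s_def sum_divide_distrib[symmetric])
    moreover have "(\<lambda>x. \<Sum>j\<in>J. c j * v j x) = (\<lambda>x. s * (\<Sum>j\<in>J. (c j / s) * v j x))"
      using False by (simp add: fun_eq_iff sum_distrib_left)
    ultimately show ?thesis by (intro bexI[of _ "\<lambda>x. \<Sum>j\<in>J. (c j / s) * v j x"]) simp_all
  qed
  then obtain b where "b \<in> B" "(\<lambda>x. \<Sum>j\<in>J. c j * v j x) = (\<lambda>x. s * b x)" by blast
  moreover have "(\<lambda>x. c i * v i x + s * b x) \<in> B"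
    using absconvex_lincomb[OF B _ \<open>b \<in> B\<close>] insert.prems(1) s by simp
  ultimately show ?case using insert(1,2) by (simp add: fun_eq_iff)
qed

lemma lc_vector_topology_absconvex_nhd:
  assumes lc: "lc_vector_topology T" and U: "openin T U" "vzero \<in> U"
  obtains B where "openin T B" "absconvex B" "vzero \<in> B" "B \<subseteq> U"
proof -
  have top: "topspace T = FV" using lc unfolding lc_vector_topology_def vector_topology_def by simp
  obtain W where W: "openin T W" "vconvex W" "vzero \<in> W" "W \<subseteq> U"
    using lc U unfolding lc_vector_topology_def by blast
  define B where "B = {h \<in> topspace T. vneg h \<in> W} \<inter> W"
  have "openin T {h \<in> topspace T. vneg h \<in> W}"
    using lc_vector_topology_imp_group_topology[OF lc] W(1)
    unfolding group_topology_def by (intro openin_continuous_map_preimage) auto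
  then have "openin T B" unfolding B_def using W(1) by blast
  moreover have "absconvex B"
    unfolding absconvex_def
  proof (intro conjI ballI)
    show "B \<subseteq> FV" using top unfolding B_def by auto
    show "(\<lambda>x. 0) \<in> B" using W(3) top FV_zero unfolding B_def vzero_def vneg_def by simp
    show "(\<lambda>x. - h x) \<in> B" if "h \<in> B" for h
      using that FV_scale[of h "-1"] top unfolding B_def vneg_def by auto
    show "vconvex B"
      unfolding vconvex_def
    proof (intro ballI allI impI)
      fix f g and t :: real assume "f \<in> B" "g \<in> B" "0 \<le> t \<and> t \<le> 1"
      moreover have "vneg (vadd (smul t f) (smul (1 - t) g)) = vadd (smul t (vneg f)) (smul (1 - t) (vneg g))"
        by (simp add: vadd_def smul_def vneg_def fun_eq_iff)
      ultimately show "vadd (smul t f) (smul (1 - t) g) \<in> B"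
        using W(2) FV_lincomb top unfolding vconvex_def B_def by (auto simp: vadd_def smul_def)
    qed
  qed
  moreover have "vzero \<in> B" using W(3) top FV_zero unfolding B_def vzero_def vneg_def by simp
  ultimately show ?thesis using that W(4) unfolding B_def by blast
qed

lemma vector_topology_absorbing:
  assumes vt: "vector_topology T" and B: "openin T B" "vzero \<in> B" and e: "e \<in> FV"
  obtains s where "s > 0" "(\<lambda>x. s * e x) \<in> B"
proof -
  have "openin euclideanreal {c \<in> topspace euclideanreal. smul c e \<in> B}"
    by (rule openin_continuous_map_preimage[OF continuous_map_smul_right[OF vt e] B(1)])
  moreover have "smul 0 e \<in> B" using B(2) by (simp add: smul_def vzero_def)
  ultimately obtain r where r: "r > 0" "ball 0 r \<subseteq> {c. smul c e \<in> B}"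
    using openE[of "{c. smul c e \<in> B}" 0] by auto
  then have "smul (r / 2) e \<in> B" using subsetD[OF r(2), of "r / 2"] by (simp add: dist_real_def)
  then show ?thesis using that[of "r / 2"] r(1) by (simp add: smul_def)
qed

lemma eventually_scaled_basis_vec_in:
  assumes vt: "vector_topology T" and dc: "continuous_map (top_of_set conv_seq) T delta"
    and B: "openin T B" "vzero \<in> B"
  shows "eventually (\<lambda>n. (\<lambda>x. K * basis_vec n x) \<in> B) sequentially"
proof -
  define g where "g x = smul K (vadd (delta x) (vneg (delta 0)))" for x
  have "vneg (delta 0) \<in> FV" using FV_scale[OF delta_in_FV, of 0 "-1"] by (simp add: vneg_def conv_seq_def)
  then have "continuous_map (top_of_set conv_seq) T g"
    unfolding g_def using continuous_map_compose[OF dc continuous_map_compose[OF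
        continuous_map_vadd_right[OF vt] continuous_map_smul_left[OF vt]]]
    by (simp add: o_def)
  moreover have "1 / real n \<in> conv_seq" for n
    unfolding conv_seq_iff by (cases "n = 0") auto
  then have "limitin (top_of_set conv_seq) (\<lambda>n. 1 / real n) 0 sequentially"
    using lim_inverse_n' unfolding limitin_subtopology by (simp add: conv_seq_def)
  ultimately have "limitin T (\<lambda>n. g (1 / real n)) (g 0) sequentially"
    using continuous_map_limit by (fastforce simp: o_def)
  moreover have "g 0 = vzero" by (simp add: g_def smul_def vadd_def vneg_def vzero_def)
  ultimately have ev: "eventually (\<lambda>n. g (1 / real n) \<in> B) sequentially"
    using B limitinD by fastforce
  have eq: "g (1 / real n) = (\<lambda>x. K * basis_vec n x)" if "1 \<le> n" for n
    using that by (simp add: g_def basis_vec_eq_delta_diff smul_def vadd_def vneg_def)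
  show ?thesis
    using ev eventually_ge_at_top[of 1] by eventually_elim (use eq in auto)
qed

text \<open>The weights \<open>t\<^sub>j\<close> are the largest integers \<open>K \<le> j\<close> with \<open>K e\<^sub>j \<in> B\<close> (or an absorbing
  scalar if that is larger), so they tend to infinity.\<close>

lemma absconvex_unbounded_weights:
  assumes B: "absconvex B" and absorb: "\<And>j. \<exists>s>0. (\<lambda>x. s * basis_vec j x) \<in> B"
    and tail: "\<And>K::nat. eventually (\<lambda>n. (\<lambda>x. real K * basis_vec n x) \<in> B) sequentially"
  obtains t where "\<And>j. 0 < t j" "\<And>j. (\<lambda>x. t j * basis_vec j x) \<in> B" "null_weight (\<lambda>j. 1 / t j)"
proof -
  obtain s where s: "\<And>j. 0 < s j \<and> (\<lambda>x. s j * basis_vec j x) \<in> B"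
    using absorb by metis
  obtain N where N: "\<And>K n. N K \<le> n \<Longrightarrow> (\<lambda>x. real K * basis_vec n x) \<in> B"
    using tail unfolding eventually_sequentially by metis
  define S where "S j = {K. K \<le> j \<and> (\<lambda>x. real K * basis_vec j x) \<in> B}" for j
  have S: "finite (S j)" "0 \<in> S j" for j
    using B unfolding S_def absconvex_def by auto
  define t where "t j = max (s j) (real (Max (S j)))" for j
  have t_pos: "0 < t j" for j unfolding t_def using s[of j] by auto
  have t_in: "(\<lambda>x. t j * basis_vec j x) \<in> B" for j
  proof (cases "s j \<ge> real (Max (S j))")
    case True
    then show ?thesis using s[of j] unfolding t_def by simp
  next
    case False
    have "Max (S j) \<in> S j" using S by (intro Max_in) auto
    then show ?thesis using False unfolding t_def S_def by simp
  qed
  have t_ge: "real K \<le> t j" if "max (N K) K \<le> j" for K j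
  proof -
    have "K \<in> S j" using that N[of K j] unfolding S_def by auto
    then have "K \<le> Max (S j)" using S(1) by simp
    then show ?thesis unfolding t_def by linarith
  qed
  have "filterlim t at_top sequentially"
    unfolding filterlim_at_top eventually_sequentially
  proof
    fix Z :: real
    obtain K :: nat where "Z \<le> real K" using real_arch_simple by blast
    then show "\<exists>n0. \<forall>n\<ge>n0. Z \<le> t n" using t_ge by (intro exI[of _ "max (N K) K"]) (auto intro: order_trans)
  qed
  then have "(\<lambda>j. 1 / t j) \<longlonglongrightarrow> 0"
    using tendsto_inverse_0_at_top by (simp add: inverse_eq_divide)
  then have "null_weight (\<lambda>j. 1 / t j)" using t_pos by (simp add: null_weight_def)
  then show ?thesis using that t_pos t_in by blast
qed

lemma absconvex_weighted_ball:
  assumes B: "absconvex B" and t: "\<And>j. 0 < t j" "\<And>j. (\<lambda>x. t j * basis_vec j x) \<in> B"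
    and h: "h \<in> FV" and small: "weighted_l1 (\<lambda>j. 1 / t j) h \<le> 1"
  shows "h \<in> B"
proof -
  define J where "J = insert 0 (tail_support h)"
  have J: "finite J" unfolding J_def using finite_tail_support[OF h] by simp
  have "h = (\<lambda>x. \<Sum>j\<in>J. coord h j * basis_vec j x)" unfolding J_def by (rule FV_basis_expansion[OF h])
  also have "\<dots> = (\<lambda>x. \<Sum>j\<in>J. (coord h j / t j) * (t j * basis_vec j x))"
    using t(1) less_imp_neq[OF t(1)] by (simp add: fun_eq_iff)
  finally have h_eq: "h = (\<lambda>x. \<Sum>j\<in>J. (coord h j / t j) * (t j * basis_vec j x))" .
  have "(\<Sum>j\<in>J. \<bar>coord h j / t j\<bar>) = weighted_l1 (\<lambda>j. 1 / t j) h"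
    unfolding weighted_l1_def J_def using t(1) by (intro sum.cong refl) (simp add: abs_div_pos)
  then have coeffs: "(\<Sum>j\<in>J. \<bar>coord h j / t j\<bar>) \<le> 1" using small by simp
  have "(\<lambda>x. \<Sum>j\<in>J. (coord h j / t j) * (t j * basis_vec j x)) \<in> B"
    by (rule absconvex_sum[OF B J]) (use t(2) coeffs in auto)
  then show ?thesis using h_eq by metis
qed

lemma absconvex_nhd_contains_weighted_ball:
  assumes vt: "vector_topology T" and dc: "continuous_map (top_of_set conv_seq) T delta"
    and B: "openin T B" "absconvex B" "vzero \<in> B"
  obtains w where "null_weight w" "\<And>h. h \<in> FV \<Longrightarrow> weighted_l1 w h \<le> 1 \<Longrightarrow> h \<in> B"
proof -
  have "\<exists>s>0. (\<lambda>x. s * basis_vec j x) \<in> B" for j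
    using vector_topology_absorbing[OF vt B(1,3) basis_vec_in_FV] by metis
  moreover have "eventually (\<lambda>n. (\<lambda>x. real K * basis_vec n x) \<in> B) sequentially" for K :: nat
    by (rule eventually_scaled_basis_vec_in[OF vt dc B(1,3)])
  ultimately obtain t where t: "\<And>j. 0 < t j" "\<And>j. (\<lambda>x. t j * basis_vec j x) \<in> B"
      "null_weight (\<lambda>j. 1 / t j)"
    using absconvex_unbounded_weights[OF B(2)] by metis
  then show ?thesis using that absconvex_weighted_ball[OF B(2) t(1,2)] by blast
qed

lemma coarser_free_topology:
  assumes lc: "lc_vector_topology T" and dc: "continuous_map (top_of_set conv_seq) T delta"
  shows "coarser T free_topology"
  unfolding coarser_def
proof (intro allI impI)
  have vt: "vector_topology T" using lc unfolding lc_vector_topology_def by simp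
  have top: "topspace T = FV" using vt unfolding vector_topology_def by simp
  fix U assume U: "openin T U"
  show "openin free_topology U"
    unfolding free.openin_seminorm_topology seminorm_open_def
  proof (intro conjI ballI)
    show "U \<subseteq> FV" using openin_subset[OF U] top by simp
    fix f0 assume f0U: "f0 \<in> U"
    then have f0: "f0 \<in> FV" using openin_subset[OF U] top by auto
    define U' where "U' = {h \<in> topspace T. vadd h f0 \<in> U}"
    have "openin T U'"
      unfolding U'_def by (rule openin_continuous_map_preimage[OF continuous_map_vadd_right[OF vt f0] U])
    moreover have "vzero \<in> U'" unfolding U'_def using top FV_zero f0U by (simp add: vadd_def vzero_def)
    ultimately obtain B where B: "openin T B" "absconvex B" "vzero \<in> B" "B \<subseteq> U'"
      using lc_vector_topology_absconvex_nhd[OF lc] by metis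
    obtain w where w: "null_weight w" "\<And>h. h \<in> FV \<Longrightarrow> weighted_l1 w h \<le> 1 \<Longrightarrow> h \<in> B"
      using absconvex_nhd_contains_weighted_ball[OF vt dc B(1-3)] by metis
    have "seminorm_ball (weighted_seminorm w 0) f0 1 \<subseteq> U"
    proof
      fix g assume "g \<in> seminorm_ball (weighted_seminorm w 0) f0 1"
      then have "(\<lambda>x. g x - f0 x) \<in> B" and g: "g \<in> FV"
        using w(2) FV_diff[OF _ f0] unfolding seminorm_ball_def weighted_seminorm_def by auto
      then have "vadd (\<lambda>x. g x - f0 x) f0 \<in> U" using B(4) unfolding U'_def by auto
      then show "g \<in> U" by (simp add: vadd_def)
    qed
    moreover have "weighted_seminorm w 0 \<in> weighted_seminorms {0}"
      using w(1) unfolding weighted_seminorms_def by blast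
    ultimately show "\<exists>q\<in>weighted_seminorms {0}. seminorm_ball q f0 1 \<subseteq> U" by blast
  qed
qed

lemma free_lc_topology_free_topology: "free_lc_topology free_topology"
  unfolding free_lc_topology_def
  using free.lc_vector_topology continuous_map_delta_free_topology coarser_free_topology by blast

lemma free_lc_topology_unique: "free_lc_topology T \<Longrightarrow> T = free_topology"
  using coarser_free_topology free_lc_topology_free_topology
  unfolding free_lc_topology_def coarser_def topology_eq by blast

section \<open>A strictly finer topology with the same dual and the same characters\<close>

abbreviation finer_topology :: "fvec topology" where
  "finer_topology \<equiv> seminorm_topology (weighted_seminorms {l. 0 \<le> l})"

interpretation finer: seminorm_family "weighted_seminorms {l. 0 \<le> l}"
  by (rule seminorm_family_weighted_seminorms) auto

lemma coarser_free_finer: "coarser free_topology finer_topology"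
  by (rule coarser_seminorm_topology[OF free.seminorm_family_axioms finer.seminorm_family_axioms])
    (auto simp: weighted_seminorms_def)

lemma not_coarser_finer_free: "\<not> coarser finer_topology free_topology"
proof
  assume coarser: "coarser finer_topology free_topology"
  define q1 where "q1 = weighted_seminorm (\<lambda>n. 1 / (real n + 1)) 1"
  have q1: "q1 \<in> weighted_seminorms {l. 0 \<le> l}"
    unfolding q1_def weighted_seminorms_def using null_weight_inverse_Suc by force
  have d0: "delta 0 \<in> FV" using delta_in_FV by (simp add: conv_seq_def)
  have "openin free_topology (seminorm_ball q1 (delta 0) 1)"
    using coarser finer.openin_seminorm_ball[OF q1 d0] unfolding coarser_def by blast
  moreover have "delta 0 \<in> seminorm_ball q1 (delta 0) 1"
    using centre_in_seminorm_ball[OF finer.seminorm[OF q1] d0] by simp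
  ultimately obtain q where "q \<in> weighted_seminorms {0}" "seminorm_ball q (delta 0) 1 \<subseteq> seminorm_ball q1 (delta 0) 1"
    using free.seminorm_openD by blast
  then obtain w where w: "null_weight w"
    "seminorm_ball (weighted_seminorm w 0) (delta 0) 1 \<subseteq> seminorm_ball q1 (delta 0) 1"
    unfolding weighted_seminorms_def by auto
  obtain N where "\<forall>n\<ge>N. w n < 1"
    using w(1) order_tendstoD(2)[of w 0 sequentially 1]
    unfolding null_weight_def eventually_sequentially by auto
  then obtain n where n: "1 \<le> n" "w n < 1" by (metis max.cobounded1 max.cobounded2)
  have dn: "delta (1 / real n) \<in> FV" using delta_in_FV n(1) unfolding conv_seq_iff by auto
  have "delta (1 / real n) \<in> seminorm_ball (weighted_seminorm w 0) (delta 0) 1"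
    using dn n weighted_l1_basis_vec[OF n(1), of w] basis_vec_eq_delta_diff[OF n(1)]
    unfolding seminorm_ball_def weighted_seminorm_def by simp
  then have "q1 (basis_vec n) < 1"
    using w(2) unfolding seminorm_ball_def basis_vec_eq_delta_diff[OF n(1)] by auto
  moreover have "q1 (basis_vec n) = 1 / (real n + 1) + 1"
    unfolding q1_def weighted_seminorm_def
    using weighted_l1_basis_vec[OF n(1)] tail_sup_basis_vec[OF n(1)] by simp
  ultimately show False by (simp add: add_pos_pos)
qed

text \<open>The sign-weighted average of \<open>k\<close> basis vectors far out has weighted \<open>\<ell>\<^sup>1\<close> norm
  below \<open>\<epsilon>/2\<close> and sup norm \<open>1/k\<close>, while a functional with \<open>\<bar>\<phi> e\<^sub>n\<bar> \<ge> \<epsilon>\<close> on them takes the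
  value \<open>\<ge> \<epsilon>\<close> there.\<close>

lemma dominated_basis_values_tendsto_zero:
  assumes \<phi>: "linear_on_FV \<phi>" and w: "null_weight w" and l: "0 \<le> l"
    and dom: "\<And>f. f \<in> FV \<Longrightarrow> \<bar>\<phi> f\<bar> \<le> weighted_seminorm w l f"
  shows "(\<lambda>n. \<phi> (basis_vec n)) \<longlonglongrightarrow> 0"
proof (rule ccontr)
  assume "\<not> (\<lambda>n. \<phi> (basis_vec n)) \<longlonglongrightarrow> 0"
  then obtain \<epsilon> where \<epsilon>: "\<epsilon> > 0" "infinite {n. \<epsilon> \<le> \<bar>\<phi> (basis_vec n)\<bar>}"
    unfolding tendsto_iff not_all not_eventually cofinite_eq_sequentially[symmetric] frequently_cofinite
    by (auto simp: dist_real_def not_less frequently_cofinite)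
  obtain N where N: "\<And>n. N \<le> n \<Longrightarrow> w n < \<epsilon> / 2"
    using order_tendstoD(2)[of w 0 sequentially "\<epsilon> / 2"] w \<epsilon>(1)
    unfolding null_weight_def eventually_sequentially by auto
  obtain k :: nat where k: "2 * l / \<epsilon> < real k" using reals_Archimedean2 by blast
  moreover have "0 \<le> 2 * l / \<epsilon>" using l \<epsilon>(1) by simp
  ultimately have k_pos: "0 < real k" by linarith
  have "infinite ({n. \<epsilon> \<le> \<bar>\<phi> (basis_vec n)\<bar>} - {..<max N 1})"
    using \<epsilon>(2) by (intro Diff_infinite_finite) auto
  then obtain B where B: "finite B" "card B = k" "B \<subseteq> {n. \<epsilon> \<le> \<bar>\<phi> (basis_vec n)\<bar>} - {..<max N 1}"
    using infinite_arbitrarily_large by blast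
  then have B0: "0 \<notin> B" by auto
  define c where "c j = sgn (\<phi> (basis_vec j)) / real k" for j
  define v where "v x = (\<Sum>j\<in>B. c j * basis_vec j x)" for x
  have "\<epsilon> = (\<Sum>j\<in>B. \<epsilon> / real k)" using B(2) k_pos by simp
  also have "\<dots> \<le> (\<Sum>j\<in>B. c j * \<phi> (basis_vec j))"
  proof (intro sum_mono)
    fix j assume "j \<in> B"
    then have "\<epsilon> \<le> \<bar>\<phi> (basis_vec j)\<bar>" using B(3) by auto
    moreover have "c j * \<phi> (basis_vec j) = \<bar>\<phi> (basis_vec j)\<bar> / real k"
      by (simp add: c_def sgn_if)
    ultimately show "\<epsilon> / real k \<le> c j * \<phi> (basis_vec j)"
      using k_pos by (simp add: divide_right_mono)
  qed
  also have "\<dots> = \<phi> v"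
    unfolding v_def using linear_on_FV_sum[OF \<phi> B(1)] basis_vec_in_FV by metis
  finally have lower: "\<epsilon> \<le> \<bar>\<phi> v\<bar>" by simp
  have "weighted_seminorm w l v \<le> \<epsilon> / 2 + l / real k"
    unfolding v_def
  proof (rule weighted_seminorm_basis_comb_le[OF B(1) B0 B(2)])
    show "w j \<le> \<epsilon> / 2" if "j \<in> B" for j
    proof -
      have "N \<le> j" using that B(3) by auto
      then show ?thesis using N less_imp_le by blast
    qed
    show "\<bar>c j\<bar> \<le> 1 / real k" for j using k_pos by (simp add: c_def abs_sgn_eq)
  qed (use k_pos \<epsilon>(1) l in auto)
  moreover have "l / real k < \<epsilon> / 2"
    using k k_pos \<epsilon>(1) by (simp add: field_simps)
  ultimately have "weighted_seminorm w l v < \<epsilon>" by linarith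
  moreover have "v \<in> FV" unfolding v_def using basis_comb_in_FV[OF B(1)] by simp
  ultimately show False using lower dom by fastforce
qed

lemma dominated_by_weighted_l1:
  assumes \<phi>: "linear_on_FV \<phi>" and w: "null_weight w" and l: "0 \<le> l"
    and dom: "\<And>f. f \<in> FV \<Longrightarrow> \<bar>\<phi> f\<bar> \<le> weighted_seminorm w l f"
  obtains w' where "null_weight w'" "\<And>f. f \<in> FV \<Longrightarrow> \<bar>\<phi> f\<bar> \<le> weighted_seminorm w' 0 f"
proof -
  define w' where "w' j = \<bar>\<phi> (basis_vec j)\<bar> + 1 / (real j + 1)" for j
  have "(\<lambda>j. \<bar>\<phi> (basis_vec j)\<bar>) \<longlonglongrightarrow> 0"
    using tendsto_rabs_zero[OF dominated_basis_values_tendsto_zero[OF assms]] .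
  then have "null_weight w'"
    using null_weight_inverse_Suc tendsto_add[of _ 0 _ _ 0] unfolding null_weight_def w'_def
    by (auto intro: add_nonneg_pos)
  moreover have "\<bar>\<phi> f\<bar> \<le> weighted_seminorm w' 0 f" if f: "f \<in> FV" for f
  proof -
    have "\<phi> f = (\<Sum>j\<in>insert 0 (tail_support f). \<phi> (basis_vec j) * coord f j)"
      using linear_on_FV_basis_expansion[OF \<phi> f] by (simp add: mult.commute)
    also have "\<bar>\<dots>\<bar> \<le> weighted_l1 w' f"
      using finite_tail_support[OF f] f
      by (intro coord_functional_le_weighted_l1) (auto simp: w'_def)
    finally show ?thesis by (simp add: weighted_seminorm_def)
  qed
  ultimately show ?thesis using that by blast
qed

lemma continuous_map_free_if_dominated:
  assumes \<phi>: "linear_on_FV \<phi>" and q: "q \<in> weighted_seminorms {l. 0 \<le> l}"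
    and dom: "\<And>f. f \<in> FV \<Longrightarrow> \<bar>\<phi> f\<bar> \<le> q f"
  shows "continuous_map free_topology euclideanreal \<phi>"
proof -
  obtain w l where "q = weighted_seminorm w l" "null_weight w" "0 \<le> l"
    using q unfolding weighted_seminorms_def by blast
  then obtain w' where w': "null_weight w'" "\<And>f. f \<in> FV \<Longrightarrow> \<bar>\<phi> f\<bar> \<le> weighted_seminorm w' 0 f"
    using dominated_by_weighted_l1[OF \<phi>] dom by metis
  moreover have "weighted_seminorm w' 0 \<in> weighted_seminorms {0}"
    using w'(1) unfolding weighted_seminorms_def by blast
  ultimately show ?thesis using free.continuous_map_if_dominated[OF \<phi>] by blast
qed

lemma topspace_free_finer: "topspace free_topology = topspace finer_topology"
  using free.topspace_seminorm_topology finer.topspace_seminorm_topology by simp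

lemma lc_dual_finer_topology: "lc_dual finer_topology = lc_dual free_topology"
proof
  show "lc_dual free_topology \<subseteq> lc_dual finer_topology"
    using coarser_imp_dual_subset(1)[OF coarser_free_finer topspace_free_finer] .
  show "lc_dual finer_topology \<subseteq> lc_dual free_topology"
  proof
    fix \<phi> assume "\<phi> \<in> lc_dual finer_topology"
    then have \<phi>: "linear_on_FV \<phi>" "continuous_map finer_topology euclideanreal \<phi>"
      and ext: "\<forall>x. x \<notin> FV \<longrightarrow> \<phi> x = 0"
      unfolding lc_dual_def by auto
    obtain q where "q \<in> weighted_seminorms {l. 0 \<le> l}" "\<forall>f\<in>FV. \<bar>\<phi> f\<bar> \<le> q f"
      using finer.dominated_if_continuous_map[OF \<phi>] by blast
    then have "continuous_map free_topology euclideanreal \<phi>"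
      using continuous_map_free_if_dominated[OF \<phi>(1)] by blast
    then show "\<phi> \<in> lc_dual free_topology" unfolding lc_dual_def using \<phi>(1) ext by auto
  qed
qed

lemma characters_finer_topology: "characters finer_topology = characters free_topology"
proof
  show "characters free_topology \<subseteq> characters finer_topology"
    using coarser_imp_dual_subset(2)[OF coarser_free_finer topspace_free_finer] .
  show "characters finer_topology \<subseteq> characters free_topology"
  proof
    fix ch assume ch: "ch \<in> characters finer_topology"
    obtain q \<phi> where \<phi>: "q \<in> weighted_seminorms {l. 0 \<le> l}" "linear_on_FV \<phi>"
      "\<And>f. f \<in> FV \<Longrightarrow> \<bar>\<phi> f\<bar> \<le> q f" "\<And>f. f \<in> FV \<Longrightarrow> ch f = cis (\<phi> f)"
      using finer.character_eq_cis_dominated[OF ch] by blast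
    have "continuous_map free_topology euclidean (\<lambda>f. cis (1 * \<phi> f))"
      using continuous_map_free_if_dominated[OF \<phi>(2,1,3)] by (rule continuous_map_cis_comp)
    then have "continuous_map free_topology euclidean ch"
      by (rule continuous_map_eq) (use \<phi>(4) free.topspace_seminorm_topology in auto)
    then show "ch \<in> characters free_topology" using ch unfolding characters_def by auto
  qed
qed

theorem theorem1p1:
  shows "(\<exists>T. free_lc_topology T) \<and>
         (\<forall>T. free_lc_topology T \<longrightarrow> \<not> mackey_space T \<and> \<not> mackey_group T)"
proof (intro conjI allI impI)
  show "\<exists>T. free_lc_topology T" using free_lc_topology_free_topology by blast
  fix T assume "free_lc_topology T"
  then have T: "T = free_topology" by (rule free_lc_topology_unique)
  show "\<not> mackey_space T"
    using finer.lc_vector_topology lc_dual_finer_topology not_coarser_finer_free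
    unfolding mackey_space_def T by blast
  have "locally_quasi_convex finer_topology"
    by (intro finer.locally_quasi_convex norming_weighted_seminorms) simp
  then show "\<not> mackey_group T"
    using characters_finer_topology not_coarser_finer_free
    unfolding mackey_group_def T by blast
qed
end
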